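(* Let $c>0$. There is a constant $C=C(c)$ such that the following holds. Let $p\ge 2$ be an integer and let $\mathcal{F}$ be a finite family of $n$ nonempty subsets ("regions") of $\mathbb{R}^d$ whose dual hypergraph has a hereditarily $c$-linear Delaunay graph. If $\mathcal{F}$ satisfies the $(p,2)$-property, then $\mathcal{F}$ admits a transversal of size at most $C\,p\log p$ (i.e., of size $O(p\log p)$).
   Context: A hypergraph $H=(V,\mathcal{E})$ consists of a finite vertex set $V$ and a collection $\mathcal{E}$ of subsets of $V$. For $S\subseteq V$, $H|_S=(S,\{e\cap S: e\in\mathcal{E}\})$. The Delaunay graph of $H$ is the graph on $V$ whose edges are the hyperedges of size exactly $2$. $H$ has a hereditarily $c$-linear Delaunay graph if for every nonempty $S\subseteq V$ the Delaunay graph of $H|_S$ has fewer than $c|S|$ edges. The dual hypergraph of a family $\mathcal{F}$ of subsets of $\mathbb{R}^d$ has vertex set $\mathcal{F}$ and, for each $x\in\mathbb{R}^d$, the hyperedge $e_x=\{B\in\mathcal{F}: x\in B\}$. $\mathcal{F}$ satisfies the $(p,2)$-property if among any $p$ members of $\mathcal{F}$ some two have nonempty intersection. A transversal of $\mathcal{F}$ is a set of points of $\mathbb{R}^d$ meeting every member of $\mathcal{F}$. *)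

theory Defs
  imports "HOL-Analysis.Analysis"
begin

text \<open>Euclidean space R^d, realised as the real sequences vanishing from index d on
  (so that the dimension d can be quantified inside the statement).\<close>
definition euclid :: "nat \<Rightarrow> (nat \<Rightarrow> real) set" where
  "euclid d = {x. \<forall>i\<ge>d. x i = 0}"

definition restrict_edges :: "'v set set \<Rightarrow> 'v set \<Rightarrow> 'v set set" where
  "restrict_edges E S = (\<lambda>e. e \<inter> S) ` E"

definition delaunay_edges :: "'v set set \<Rightarrow> 'v set set" where
  "delaunay_edges E = {e \<in> E. card e = 2}"

definition hereditarily_linear_delaunay :: "real \<Rightarrow> 'v set \<Rightarrow> 'v set set \<Rightarrow> bool" where
  "hereditarily_linear_delaunay c V E \<longleftrightarrow>
     (\<forall>S. S \<subseteq> V \<and> S \<noteq> {} \<longrightarrow>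
        real (card (delaunay_edges (restrict_edges E S))) < c * real (card S))"

definition dual_edges :: "nat \<Rightarrow> (nat \<Rightarrow> real) set set \<Rightarrow> (nat \<Rightarrow> real) set set set" where
  "dual_edges d F = (\<lambda>x. {B \<in> F. x \<in> B}) ` euclid d"

definition p2_property :: "nat \<Rightarrow> 'a set set \<Rightarrow> bool" where
  "p2_property p F \<longleftrightarrow>
     (\<forall>G. G \<subseteq> F \<and> card G = p \<longrightarrow> (\<exists>A\<in>G. \<exists>B\<in>G. A \<noteq> B \<and> A \<inter> B \<noteq> {}))"

definition is_transversal :: "nat \<Rightarrow> (nat \<Rightarrow> real) set \<Rightarrow> (nat \<Rightarrow> real) set set \<Rightarrow> bool" where
  "is_transversal d T F \<longleftrightarrow> T \<subseteq> euclid d \<and> (\<forall>B\<in>F. T \<inter> B \<noteq> {})"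

end

theory Submission
  imports Defs "HOL-Probability.Probability"
begin

text \<open>A random sampling argument in the style of Clarkson and Shor shows that for a family whose
  dual Delaunay graph is hereditarily sparse the intersecting pairs are few compared with the depth:
  if every point lies in regions of total weight at most \<open>k\<close>, then greedily one finds pairwise
  disjoint regions whose number is proportional to the total weight divided by \<open>k\<close>. The
  \<open>(p, 2)\<close>-property allows fewer than \<open>p\<close> disjoint regions, so for every weighting some point
  has depth at least a \<open>1 / O(p)\<close> fraction of the total weight. Multiplicative weights turn this
  into a multiset of points hitting every region a \<open>1 / O(p)\<close> fraction of the time, i.e. a
  fractional transversal of size \<open>O(p)\<close>. Sparsity also bounds the VC-dimension of the regions: a
  shattered set of \<open>q choose 2\<close> points would realise all pairs among \<open>q\<close> regions as Delaunay
  edges. Hence the \<open>\<epsilon>\<close>-net theorem with \<open>\<epsilon> = 1 / O(p)\<close>, obtained by double sampling, yields a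
  transversal of size \<open>O(p log p)\<close>.\<close>

definition dual_hyperedges :: "'a set \<Rightarrow> 'a set set \<Rightarrow> 'a set set set" where
  "dual_hyperedges P F = (\<lambda>x. {B \<in> F. x \<in> B}) ` P"

definition weighted_depth :: "'a set set \<Rightarrow> ('a set \<Rightarrow> real) \<Rightarrow> 'a \<Rightarrow> real" where
  "weighted_depth S w x = (\<Sum>B \<in> {B \<in> S. x \<in> B}. w B)"

definition intersecting_pairs :: "'a set set \<Rightarrow> ('a set \<times> 'a set) set" where
  "intersecting_pairs S = {(A, B). A \<in> S \<and> B \<in> S \<and> A \<noteq> B \<and> A \<inter> B \<noteq> {}}"

lemma exp_neg_twice_le_one_minus:
  fixes q :: real
  assumes "0 \<le> q" "q \<le> 1/2"
  shows "exp (-2 * q) \<le> 1 - q"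
proof -
  have "- q - 2 * q\<^sup>2 \<le> ln (1 - q)"
    using ln_one_minus_pos_lower_bound assms by blast
  moreover have "2 * q\<^sup>2 \<le> q"
    using mult_right_mono[of "2 * q" 1 q] assms by (simp add: power2_eq_square)
  ultimately have "-2 * q \<le> ln (1 - q)" by linarith
  then have "exp (-2 * q) \<le> exp (ln (1 - q))" by simp
  also have "\<dots> = 1 - q" using assms by simp
  finally show ?thesis .
qed

lemma exp_sum_le_prod_one_minus:
  fixes q :: "'b \<Rightarrow> real"
  assumes "finite I" "\<forall>i\<in>I. 0 \<le> q i \<and> q i \<le> 1/2"
  shows "exp (-2 * (\<Sum>i\<in>I. q i)) \<le> (\<Prod>i\<in>I. 1 - q i)"
proof -
  have "exp (-2 * (\<Sum>i\<in>I. q i)) = (\<Prod>i\<in>I. exp (-2 * q i))"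
    using assms(1) by (simp add: exp_sum sum_distrib_left)
  also have "\<dots> \<le> (\<Prod>i\<in>I. 1 - q i)"
    using assms(2) by (intro prod_mono) (auto intro: exp_neg_twice_le_one_minus[simplified])
  finally show ?thesis .
qed

lemma card_ordered_pairs_of_doubletons_le:
  fixes E :: "'a set set"
  assumes "finite E" "\<forall>e\<in>E. card e = 2"
  shows "card {(a, b). a \<noteq> b \<and> {a, b} \<in> E} \<le> 2 * card E"
proof -
  define pairs_of where "pairs_of e = {(a, b). a \<in> e \<and> b \<in> e \<and> a \<noteq> b}" for e :: "'a set"
  have card_pairs_of: "card (pairs_of e) = 2" if "e \<in> E" for e
  proof -
    from assms(2) that have "\<exists>u v. e = {u, v} \<and> u \<noteq> v" by (simp add: card_2_iff)
    then obtain u v where "e = {u, v}" "u \<noteq> v" by blast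
    then have "pairs_of e = {(u, v), (v, u)}" by (auto simp: pairs_of_def)
    then show ?thesis using \<open>u \<noteq> v\<close> by simp
  qed
  have "finite (pairs_of e)" if "e \<in> E" for e
    by (rule card_ge_0_finite) (simp add: card_pairs_of[OF that])
  then have "card {(a, b). a \<noteq> b \<and> {a, b} \<in> E} \<le> card (\<Union>e\<in>E. pairs_of e)"
    using assms(1) by (intro card_mono) (auto simp: pairs_of_def)
  also have "\<dots> \<le> (\<Sum>e\<in>E. card (pairs_of e))"
    using assms(1) by (rule card_UN_le)
  also have "\<dots> = 2 * card E"
    using card_pairs_of by simp
  finally show ?thesis .
qed

lemma weight_le_weighted_depth:
  assumes "finite S" "\<forall>B\<in>S. 0 \<le> w B" "A \<in> S" "x \<in> A"
  shows "w A \<le> weighted_depth S w x"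
  unfolding weighted_depth_def using assms by (intro member_le_sum) auto

lemma expectation_card_eq_sum_prob:
  fixes M :: "'b pmf"
  assumes "finite X" "finite (set_pmf M)"
  shows "measure_pmf.expectation M (\<lambda>f. real (card {z \<in> X. Q z f}))
    = (\<Sum>z\<in>X. measure_pmf.prob M {f. Q z f})"
proof -
  have "(\<lambda>f. real (card {z \<in> X. Q z f})) = (\<lambda>f. \<Sum>z\<in>X. indicator {f. Q z f} f)"
    using assms(1) by (auto simp: indicator_def sum.If_cases Int_def)
  then show ?thesis
    by (simp add: Bochner_Integration.integral_sum integrable_measure_pmf_finite[OF assms(2)])
qed

lemma prob_Pi_pmf_bernoulli_component:
  assumes "finite S" "C \<in> S" "0 \<le> q C" "q C \<le> 1"
  shows "measure_pmf.prob (Pi_pmf S False (\<lambda>C. bernoulli_pmf (q C))) {f. f C} = q C"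
proof -
  have "measure_pmf.prob (Pi_pmf S False (\<lambda>C. bernoulli_pmf (q C))) {f. f C}
      = measure_pmf.prob (map_pmf (\<lambda>f. f C) (Pi_pmf S False (\<lambda>C. bernoulli_pmf (q C)))) {True}"
    by (simp add: vimage_def)
  also have "map_pmf (\<lambda>f. f C) (Pi_pmf S False (\<lambda>C. bernoulli_pmf (q C))) = bernoulli_pmf (q C)"
    using Pi_pmf_component[OF assms(1), of C False "\<lambda>C. bernoulli_pmf (q C)"] assms(2) by simp
  finally show ?thesis using assms(3,4) by (simp add: measure_pmf_single)
qed

text \<open>The probability in question is \<open>q A q B \<Prod>(1 - q C)\<close> over the other \<open>C \<in> X\<close>, and the product
  is at least \<open>exp (-2 \<Sum>\<^sub>X q) \<ge> 1/e\<close>.\<close>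
lemma prob_exactly_two_sampled_ge:
  fixes q :: "'b \<Rightarrow> real"
  assumes "finite S" "X \<subseteq> S" "A \<in> X" "B \<in> X" "A \<noteq> B"
    and q_range: "\<forall>C\<in>S. 0 \<le> q C \<and> q C \<le> 1/2" and "(\<Sum>C\<in>X. q C) \<le> 1/2"
  shows "q A * q B / exp 1
    \<le> measure_pmf.prob (Pi_pmf S False (\<lambda>C. bernoulli_pmf (q C))) {f. {C \<in> X. f C} = {A, B}}"
proof -
  let ?M = "Pi_pmf S False (\<lambda>C. bernoulli_pmf (q C))"
  define event where
    "event C = (if C = A \<or> C = B then {True} else if C \<in> X then {False} else UNIV)" for C
  define h where "h C = (if C = A \<or> C = B then q C else if C \<in> X then 1 - q C else 1)" for C
  have "Pi S event \<subseteq> {f. {C \<in> X. f C} = {A, B}}"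
  proof
    fix f assume f: "f \<in> Pi S event"
    have f_event: "f C \<in> event C" if "C \<in> S" for C using f that by blast
    have "C = A \<or> C = B" if "C \<in> X" "f C" for C
      using f_event[of C] that assms(2) by (auto simp: event_def split: if_splits)
    moreover have "f A" "f B"
      using f_event[of A] f_event[of B] assms(2-4) by (auto simp: event_def)
    ultimately show "f \<in> {f. {C \<in> X. f C} = {A, B}}" using assms(3,4) by blast
  qed
  then have "measure_pmf.prob ?M (Pi S event) \<le> measure_pmf.prob ?M {f. {C \<in> X. f C} = {A, B}}"
    by (rule measure_pmf.finite_measure_mono) simp
  moreover have "measure_pmf.prob ?M (Pi S event) = q A * q B * (\<Prod>C\<in>X - {A, B}. 1 - q C)"
  proof -
    have "measure_pmf.prob ?M (Pi S event)
        = (\<Prod>C\<in>S. measure_pmf.prob (bernoulli_pmf (q C)) (event C))"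
      by (rule measure_Pi_pmf_Pi[OF assms(1)])
    also have "\<dots> = (\<Prod>C\<in>S. h C)"
      using q_range by (intro prod.cong refl) (auto simp: event_def h_def measure_pmf_single)
    also have "\<dots> = (\<Prod>C\<in>X. h C)"
      using assms(2-4) by (intro prod.mono_neutral_right[OF assms(1)]) (auto simp: h_def)
    also have "X = insert A (insert B (X - {A, B}))" using assms(3,4) by blast
    also have "(\<Prod>C\<in>insert A (insert B (X - {A, B})). h C) = h A * h B * (\<Prod>C\<in>X - {A, B}. h C)"
      using assms(1,2,5) by (simp add: finite_subset)
    also have "(\<Prod>C\<in>X - {A, B}. h C) = (\<Prod>C\<in>X - {A, B}. 1 - q C)"
      by (intro prod.cong refl) (auto simp: h_def)
    finally show ?thesis by (simp add: h_def)
  qed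
  moreover have "exp (-1) \<le> (\<Prod>C\<in>X - {A, B}. 1 - q C)"
  proof -
    have "finite X" using assms(1,2) by (rule finite_subset[rotated])
    then have "(\<Sum>C\<in>X - {A, B}. q C) \<le> (\<Sum>C\<in>X. q C)"
      using q_range assms(2) by (intro sum_mono2) auto
    then have "exp (-1) \<le> exp (-2 * (\<Sum>C\<in>X - {A, B}. q C))" using assms(7) by simp
    also have "\<dots> \<le> (\<Prod>C\<in>X - {A, B}. 1 - q C)"
      using \<open>finite X\<close> q_range assms(2) by (intro exp_sum_le_prod_one_minus) auto
    finally show ?thesis .
  qed
  moreover have "0 \<le> q A * q B" using q_range assms(2-4) by (meson mult_nonneg_nonneg subsetD)
  ultimately show ?thesis
    by (smt (verit) divide_inverse exp_minus mult_left_mono)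
qed

lemma exists_below_weighted_average:
  fixes w g :: "'b \<Rightarrow> real"
  assumes "finite S" "\<forall>A\<in>S. 0 \<le> w A" "0 < (\<Sum>A\<in>S. w A)"
    and "(\<Sum>A\<in>S. w A * g A) \<le> t * (\<Sum>A\<in>S. w A)"
  shows "\<exists>A\<in>S. 0 < w A \<and> g A \<le> t"
proof (rule ccontr)
  assume none: "\<not> ?thesis"
  have "(\<Sum>A\<in>S. w A * t) < (\<Sum>A\<in>S. w A * g A)"
  proof (rule sum_strict_mono_ex1[OF assms(1)])
    show "\<forall>A\<in>S. w A * t \<le> w A * g A"
    proof
      fix A assume "A \<in> S"
      show "w A * t \<le> w A * g A"
      proof (cases "0 < w A")
        case True
        then show ?thesis using none \<open>A \<in> S\<close> by (auto intro: mult_left_mono)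
      next
        case False
        then show ?thesis using assms(2) \<open>A \<in> S\<close> by force
      qed
    qed
    obtain A where "A \<in> S" "0 < w A"
      using assms(3) by (meson not_le sum_nonpos)
    moreover have "t < g A" using none \<open>A \<in> S\<close> \<open>0 < w A\<close> by auto
    ultimately show "\<exists>A\<in>S. w A * t < w A * g A" by (meson mult_strict_left_mono)
  qed
  moreover have "(\<Sum>A\<in>S. w A * t) = t * (\<Sum>A\<in>S. w A)"
    by (simp add: sum_distrib_left mult.commute)
  ultimately show False using assms(4) by linarith
qed

lemma p2_property_card_disjoint_lt:
  assumes "p2_property p F" "I \<subseteq> F" "pairwise disjnt I" "finite I"
  shows "card I < p"
proof (rule ccontr)
  assume "\<not> card I < p"
  then obtain G where "G \<subseteq> I" "card G = p"
    by (meson not_less obtain_subset_with_card_n)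
  then obtain A B where "A \<in> G" "B \<in> G" "A \<noteq> B" "A \<inter> B \<noteq> {}"
    using assms(1,2) unfolding p2_property_def by blast
  then show False using assms(3) \<open>G \<subseteq> I\<close> by (auto simp: pairwise_def disjnt_def)
qed

definition hits :: "'b list \<Rightarrow> 'b set \<Rightarrow> nat" where
  "hits xs B = length (filter (\<lambda>x. x \<in> B) xs)"

lemma hits_snoc: "hits (xs @ [x]) B = hits xs B + (if x \<in> B then 1 else 0)"
  by (simp add: hits_def)

lemma halvings_lower_bound:
  fixes \<beta> n :: real and h t :: nat
  assumes "0 < \<beta>" "\<beta> \<le> 1/2" "1 \<le> n" "2 * ln n \<le> t * \<beta>"
    and "(1/2) ^ h \<le> n * (1 - \<beta>) ^ t"
  shows "t * \<beta> / 2 \<le> h"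
proof -
  have "- (h * ln 2) = ln ((1/2::real) ^ h)" by (simp add: ln_realpow ln_div)
  also have "\<dots> \<le> ln (n * (1 - \<beta>) ^ t)"
    using assms by (subst ln_le_cancel_iff) auto
  also have "\<dots> = ln n + t * ln (1 - \<beta>)"
    using assms by (simp add: ln_mult ln_realpow)
  also have "\<dots> \<le> ln n - t * \<beta>"
    using ln_le_minus_one[of "1 - \<beta>"] assms(1,2) mult_left_mono[of "ln (1 - \<beta>)" "- \<beta>" "real t"]
    by simp
  finally have "t * \<beta> / 2 \<le> h * ln 2" using assms(4) by linarith
  also have "\<dots> \<le> h" using ln_2_less_1 by (simp add: mult_left_le)
  finally show ?thesis .
qed

section \<open>Random sampling in families with a sparse Delaunay graph\<close>

locale sparse_delaunay_family =
  fixes P :: "'a set" and F :: "'a set set" and c :: real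
  assumes finite_F: "finite F"
    and region_subset: "B \<in> F \<Longrightarrow> B \<subseteq> P"
    and region_nonempty: "B \<in> F \<Longrightarrow> B \<noteq> {}"
    and c_nonneg: "0 \<le> c"
    and sparse: "R \<subseteq> F \<Longrightarrow>
      real (card (delaunay_edges (restrict_edges (dual_hyperedges P F) R))) \<le> c * real (card R)"
begin

lemma delaunay_edgeI:
  assumes "R \<subseteq> F" "x \<in> P" "{C \<in> R. x \<in> C} = {A, B}" "A \<noteq> B"
  shows "{A, B} \<in> delaunay_edges (restrict_edges (dual_hyperedges P F) R)"
proof -
  have "{C \<in> F. x \<in> C} \<inter> R = {A, B}" using assms(1,3) by auto
  moreover have "{C \<in> F. x \<in> C} \<in> dual_hyperedges P F"
    unfolding dual_hyperedges_def using assms(2) by (rule imageI)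
  ultimately have "{A, B} \<in> restrict_edges (dual_hyperedges P F) R"
    unfolding restrict_edges_def by (metis (no_types, lifting) image_eqI)
  then show ?thesis using assms(4) by (simp add: delaunay_edges_def)
qed

lemma card_delaunay_pairs_le:
  assumes "R \<subseteq> F"
  shows "real (card {(A, B). A \<noteq> B \<and> {A, B} \<in> delaunay_edges (restrict_edges (dual_hyperedges P F) R)})
    \<le> 2 * c * card R"
proof -
  let ?E = "delaunay_edges (restrict_edges (dual_hyperedges P F) R)"
  have "?E \<subseteq> Pow F"
    by (auto simp: delaunay_edges_def restrict_edges_def dual_hyperedges_def)
  then have "finite ?E" using finite_F by (meson finite_Pow_iff finite_subset)
  then have "card {(A, B). A \<noteq> B \<and> {A, B} \<in> ?E} \<le> 2 * card ?E"
    by (rule card_ordered_pairs_of_doubletons_le) (simp add: delaunay_edges_def)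
  then show ?thesis using sparse[OF assms] by linarith
qed

lemma prob_sampled_delaunay_edge_ge:
  fixes q :: "'a set \<Rightarrow> real"
  assumes "S \<subseteq> F" and q_range: "\<forall>C\<in>S. 0 \<le> q C \<and> q C \<le> 1/2"
    and "x \<in> P" and depth: "weighted_depth S q x \<le> 1/2"
    and "A \<in> S" "B \<in> S" "A \<noteq> B" "x \<in> A" "x \<in> B"
  shows "q A * q B / exp 1 \<le> measure_pmf.prob (Pi_pmf S False (\<lambda>C. bernoulli_pmf (q C)))
    {f. {A, B} \<in> delaunay_edges (restrict_edges (dual_hyperedges P F) {C \<in> S. f C})}"
proof -
  let ?M = "Pi_pmf S False (\<lambda>C. bernoulli_pmf (q C))"
  define X where "X = {C \<in> S. x \<in> C}"
  have "{f. {C \<in> X. f C} = {A, B}}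
      \<subseteq> {f. {A, B} \<in> delaunay_edges (restrict_edges (dual_hyperedges P F) {C \<in> S. f C})}"
  proof (intro subsetI CollectI)
    fix f assume "f \<in> {f. {C \<in> X. f C} = {A, B}}"
    then have "{C \<in> {C \<in> S. f C}. x \<in> C} = {A, B}" by (auto simp: X_def)
    moreover have "{C \<in> S. f C} \<subseteq> F" using \<open>S \<subseteq> F\<close> by blast
    ultimately show "{A, B} \<in> delaunay_edges (restrict_edges (dual_hyperedges P F) {C \<in> S. f C})"
      using \<open>x \<in> P\<close> \<open>A \<noteq> B\<close> by (intro delaunay_edgeI)
  qed
  then have "measure_pmf.prob ?M {f. {C \<in> X. f C} = {A, B}}
      \<le> measure_pmf.prob ?M {f. {A, B} \<in> delaunay_edges (restrict_edges (dual_hyperedges P F) {C \<in> S. f C})}"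
    by (rule measure_pmf.finite_measure_mono) simp
  moreover have "q A * q B / exp 1 \<le> measure_pmf.prob ?M {f. {C \<in> X. f C} = {A, B}}"
  proof (rule prob_exactly_two_sampled_ge)
    show "finite S" using \<open>S \<subseteq> F\<close> finite_F finite_subset by blast
    show "(\<Sum>C\<in>X. q C) \<le> 1/2" using depth by (simp add: weighted_depth_def X_def)
  qed (use assms in \<open>auto simp: X_def\<close>)
  ultimately show ?thesis by linarith
qed

text \<open>The random-sampling argument of Clarkson and Shor: sample each region independently with
  probability \<open>q\<close>. Two intersecting regions become a Delaunay edge of the sample with probability at
  least \<open>q A q B / e\<close>, while the sample has at most \<open>c\<close> times as many Delaunay edges as regions.\<close>
lemma sampled_intersecting_pairs_le:
  fixes q :: "'a set \<Rightarrow> real"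
  assumes "S \<subseteq> F" and q_range: "\<forall>C\<in>S. 0 \<le> q C \<and> q C \<le> 1/2"
    and q_depth: "\<And>x. x \<in> P \<Longrightarrow> weighted_depth S q x \<le> 1/2"
  shows "(\<Sum>(A, B)\<in>intersecting_pairs S. q A * q B / exp 1) \<le> 2 * c * (\<Sum>C\<in>S. q C)"
proof -
  have finS: "finite S" using \<open>S \<subseteq> F\<close> finite_F finite_subset by blast
  define M where "M = Pi_pmf S False (\<lambda>C. bernoulli_pmf (q C))"
  define edges where
    "edges f = delaunay_edges (restrict_edges (dual_hyperedges P F) {C \<in> S. f C})" for f
  have finM: "finite (set_pmf M)"
    unfolding M_def by (rule finite_subset[OF set_Pi_pmf_subset']) (auto simp: finS)
  have finIP: "finite (intersecting_pairs S)"
    by (rule finite_subset[of _ "S \<times> S"]) (auto simp: intersecting_pairs_def finS)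
  have "(\<Sum>(A, B)\<in>intersecting_pairs S. q A * q B / exp 1)
      \<le> (\<Sum>(A, B)\<in>intersecting_pairs S. measure_pmf.prob M {f. {A, B} \<in> edges f})"
  proof (intro sum_mono, clarify)
    fix A B assume "(A, B) \<in> intersecting_pairs S"
    then obtain x where "A \<in> S" "B \<in> S" "A \<noteq> B" "x \<in> A" "x \<in> B"
      by (auto simp: intersecting_pairs_def)
    moreover have "x \<in> P" using region_subset \<open>S \<subseteq> F\<close> \<open>A \<in> S\<close> \<open>x \<in> A\<close> by blast
    ultimately show "q A * q B / exp 1 \<le> measure_pmf.prob M {f. {A, B} \<in> edges f}"
      unfolding M_def edges_def
      using prob_sampled_delaunay_edge_ge[OF \<open>S \<subseteq> F\<close> q_range] q_depth by blast
  qed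
  also have "\<dots> = measure_pmf.expectation M
      (\<lambda>f. real (card {z \<in> intersecting_pairs S. {fst z, snd z} \<in> edges f}))"
    by (simp add: expectation_card_eq_sum_prob[OF finIP finM] case_prod_unfold)
  also have "\<dots> \<le> measure_pmf.expectation M (\<lambda>f. 2 * c * real (card {C \<in> S. f C}))"
  proof (rule integral_mono[OF integrable_measure_pmf_finite[OF finM] integrable_measure_pmf_finite[OF finM]])
    show "real (card {z \<in> intersecting_pairs S. {fst z, snd z} \<in> edges f})
        \<le> 2 * c * real (card {C \<in> S. f C})" for f
    proof -
      have "{z \<in> intersecting_pairs S. {fst z, snd z} \<in> edges f}
          \<subseteq> {(A, B). A \<noteq> B \<and> {A, B} \<in> edges f}"
        by (auto simp: intersecting_pairs_def)
      moreover have "finite {(A, B). A \<noteq> B \<and> {A, B} \<in> edges f}"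
        by (rule finite_subset[of _ "F \<times> F"])
          (auto simp: edges_def delaunay_edges_def restrict_edges_def dual_hyperedges_def finite_F)
      ultimately have "card {z \<in> intersecting_pairs S. {fst z, snd z} \<in> edges f}
          \<le> card {(A, B). A \<noteq> B \<and> {A, B} \<in> edges f}"
        by (rule card_mono[rotated])
      also have "real \<dots> \<le> 2 * c * real (card {C \<in> S. f C})"
        unfolding edges_def by (rule card_delaunay_pairs_le) (use \<open>S \<subseteq> F\<close> in blast)
      finally show ?thesis by simp
    qed
  qed
  also have "\<dots> = 2 * c * (\<Sum>C\<in>S. q C)"
  proof -
    have "measure_pmf.expectation M (\<lambda>f. real (card {C \<in> S. f C})) = (\<Sum>C\<in>S. q C)"
      using expectation_card_eq_sum_prob[OF finS finM, of "\<lambda>C f. f C"] q_range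
      unfolding M_def by (auto intro!: sum.cong prob_Pi_pmf_bernoulli_component[OF finS])
    then show ?thesis by simp
  qed
  finally show ?thesis .
qed

lemma weighted_intersecting_pairs_le:
  assumes "S \<subseteq> F" and w_nonneg: "\<forall>B\<in>S. 0 \<le> w B" and "0 < k"
    and depth: "\<forall>x\<in>P. weighted_depth S w x \<le> k"
  shows "(\<Sum>(A, B)\<in>intersecting_pairs S. w A * w B) \<le> 4 * exp 1 * c * k * (\<Sum>A\<in>S. w A)"
proof -
  have finS: "finite S" using \<open>S \<subseteq> F\<close> finite_F finite_subset by blast
  define q where "q C = w C / (2 * k)" for C
  have q_range: "\<forall>C\<in>S. 0 \<le> q C \<and> q C \<le> 1/2"
  proof
    fix C assume "C \<in> S"
    then obtain x where "x \<in> C" "x \<in> P"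
      using region_nonempty region_subset \<open>S \<subseteq> F\<close> by blast
    then have "w C \<le> k"
      using weight_le_weighted_depth[OF finS w_nonneg \<open>C \<in> S\<close>] depth by fastforce
    then show "0 \<le> q C \<and> q C \<le> 1/2"
      using w_nonneg \<open>C \<in> S\<close> \<open>0 < k\<close> by (simp add: q_def field_simps)
  qed
  have q_depth: "weighted_depth S q x \<le> 1/2" if "x \<in> P" for x
  proof -
    have "weighted_depth S q x = weighted_depth S w x / (2 * k)"
      by (simp add: weighted_depth_def q_def sum_divide_distrib)
    also have "\<dots> \<le> k / (2 * k)"
      using depth that \<open>0 < k\<close> by (intro divide_right_mono) auto
    finally show ?thesis using \<open>0 < k\<close> by simp
  qed
  have "(\<Sum>(A, B)\<in>intersecting_pairs S. q A * q B / exp 1) \<le> 2 * c * (\<Sum>C\<in>S. q C)"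
    using sampled_intersecting_pairs_le[OF \<open>S \<subseteq> F\<close> q_range q_depth] .
  moreover have "(\<Sum>(A, B)\<in>intersecting_pairs S. q A * q B / exp 1)
      = (\<Sum>(A, B)\<in>intersecting_pairs S. w A * w B) / (4 * k\<^sup>2 * exp 1)"
    by (simp add: q_def case_prod_unfold sum_divide_distrib power2_eq_square)
  moreover have "2 * c * (\<Sum>C\<in>S. q C) = 4 * exp 1 * c * k * (\<Sum>A\<in>S. w A) / (4 * k\<^sup>2 * exp 1)"
    using \<open>0 < k\<close> by (simp add: q_def sum_divide_distrib[symmetric] power2_eq_square)
  ultimately have "(\<Sum>(A, B)\<in>intersecting_pairs S. w A * w B) / (4 * k\<^sup>2 * exp 1)
      \<le> 4 * exp 1 * c * k * (\<Sum>A\<in>S. w A) / (4 * k\<^sup>2 * exp 1)"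
    by (simp only:)
  moreover have "0 < 4 * k\<^sup>2 * exp 1" using \<open>0 < k\<close> by simp
  ultimately show ?thesis unfolding divide_le_cancel by blast
qed

lemma exists_region_light_neighbourhood:
  assumes "S \<subseteq> F" "\<forall>B\<in>S. 0 \<le> w B" "0 < k" "\<forall>x\<in>P. weighted_depth S w x \<le> k"
    and "0 < (\<Sum>A\<in>S. w A)"
  shows "\<exists>A\<in>S. 0 < w A \<and> (\<Sum>B\<in>{B \<in> S. B \<noteq> A \<and> A \<inter> B \<noteq> {}}. w B) \<le> 4 * exp 1 * c * k"
proof (rule exists_below_weighted_average)
  show finS: "finite S" using assms(1) finite_F finite_subset by blast
  have "intersecting_pairs S = Sigma S (\<lambda>A. {B \<in> S. B \<noteq> A \<and> A \<inter> B \<noteq> {}})"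
    by (auto simp: intersecting_pairs_def)
  then have "(\<Sum>A\<in>S. w A * (\<Sum>B\<in>{B \<in> S. B \<noteq> A \<and> A \<inter> B \<noteq> {}}. w B))
      = (\<Sum>(A, B)\<in>intersecting_pairs S. w A * w B)"
    using finS by (simp add: sum.Sigma sum_distrib_left)
  also have "\<dots> \<le> 4 * exp 1 * c * k * (\<Sum>A\<in>S. w A)"
    using weighted_intersecting_pairs_le assms(1-4) by blast
  finally show "(\<Sum>A\<in>S. w A * (\<Sum>B\<in>{B \<in> S. B \<noteq> A \<and> A \<inter> B \<noteq> {}}. w B))
      \<le> 4 * exp 1 * c * k * (\<Sum>A\<in>S. w A)" .
qed (use assms in auto)

text \<open>Greedy selection: keep a region of positive weight with a light neighbourhood, discard its
  neighbours (total weight at most \<open>4 e c k\<close>, its own weight at most \<open>k\<close>) and recurse on the regions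
  disjoint from it.\<close>
lemma disjoint_subfamily_weight:
  assumes "S \<subseteq> F" "\<forall>B\<in>S. 0 \<le> w B" "0 < k" "\<forall>x\<in>P. weighted_depth S w x \<le> k"
  shows "\<exists>I\<subseteq>S. pairwise disjnt I \<and> (\<Sum>A\<in>S. w A) \<le> (4 * exp 1 * c + 1) * k * card I"
  using assms
proof (induction "card S" arbitrary: S rule: less_induct)
  case less
  have finS: "finite S" using less.prems(1) finite_F finite_subset by blast
  show ?case
  proof (cases "(\<Sum>A\<in>S. w A) \<le> 0")
    case True
    then show ?thesis by (intro exI[of _ "{}"]) simp
  next
    case False
    define N where "N A = {B \<in> S. B \<noteq> A \<and> A \<inter> B \<noteq> {}}" for A
    obtain A where A: "A \<in> S" "0 < w A" "(\<Sum>B\<in>N A. w B) \<le> 4 * exp 1 * c * k"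
      using exists_region_light_neighbourhood[OF less.prems] False unfolding N_def by auto
    obtain x where "x \<in> A" "x \<in> P"
      using A(1) less.prems(1) region_nonempty region_subset by blast
    then have wA: "w A \<le> k"
      using weight_le_weighted_depth[OF finS less.prems(2) A(1)] less.prems(4) by fastforce
    define S' where "S' = {B \<in> S. A \<inter> B = {}}"
    have "A \<notin> S'" using A(1) less.prems(1) region_nonempty by (auto simp: S'_def)
    then have "card S' < card S"
      using A(1) finS by (intro psubset_card_mono) (auto simp: S'_def)
    moreover have "\<forall>x\<in>P. weighted_depth S' w x \<le> k"
    proof
      fix y assume "y \<in> P"
      have "weighted_depth S' w y \<le> weighted_depth S w y"
        unfolding weighted_depth_def using finS less.prems(2) by (intro sum_mono2) (auto simp: S'_def)
      then show "weighted_depth S' w y \<le> k" using less.prems(4) \<open>y \<in> P\<close> by fastforce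
    qed
    moreover have "S' \<subseteq> F" "\<forall>B\<in>S'. 0 \<le> w B"
      using less.prems(1,2) by (auto simp: S'_def)
    ultimately obtain I' where I': "I' \<subseteq> S'" "pairwise disjnt I'"
      "(\<Sum>B\<in>S'. w B) \<le> (4 * exp 1 * c + 1) * k * card I'"
      using less.hyps less.prems(3) by blast
    have "S = insert A (N A \<union> S')" "A \<notin> N A \<union> S'" "N A \<inter> S' = {}"
      using A(1) \<open>A \<notin> S'\<close> by (auto simp: N_def S'_def)
    moreover have "finite (N A)" "finite S'" using finS by (auto simp: N_def S'_def)
    ultimately have "(\<Sum>B\<in>S. w B) = w A + ((\<Sum>B\<in>N A. w B) + (\<Sum>B\<in>S'. w B))"
      by (simp add: sum.union_disjoint)
    also have "\<dots> \<le> (4 * exp 1 * c + 1) * k * (card I' + 1)"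
      using wA A(3) I'(3) by (simp add: algebra_simps)
    also have "card I' + 1 = card (insert A I')"
    proof -
      have "finite I'" "A \<notin> I'" using I'(1) \<open>A \<notin> S'\<close> \<open>finite S'\<close> finite_subset by blast+
      then show ?thesis by simp
    qed
    finally have "(\<Sum>B\<in>S. w B) \<le> (4 * exp 1 * c + 1) * k * card (insert A I')" .
    moreover have "pairwise disjnt (insert A I')"
      using I'(1,2) by (auto simp: pairwise_insert S'_def disjnt_def)
    moreover have "insert A I' \<subseteq> S" using A(1) I'(1) by (auto simp: S'_def)
    ultimately show ?thesis by blast
  qed
qed

lemma exists_deep_point:
  assumes "p2_property p F" "1 \<le> p" "\<forall>B\<in>F. 0 \<le> w B" "0 < (\<Sum>B\<in>F. w B)"
  shows "\<exists>x\<in>P. (\<Sum>B\<in>F. w B) / ((4 * exp 1 * c + 1) * p) < weighted_depth F w x"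
proof (rule ccontr)
  define k where "k = (\<Sum>B\<in>F. w B) / ((4 * exp 1 * c + 1) * p)"
  have "0 < 4 * exp 1 * c + 1" using c_nonneg by (simp add: add_nonneg_pos)
  then have pos: "0 < (4 * exp 1 * c + 1) * p" using assms(2) by simp
  then have "0 < k" using assms(4) by (simp add: k_def)
  assume "\<not> ?thesis"
  then have "\<forall>x\<in>P. weighted_depth F w x \<le> k" by (auto simp: k_def not_less)
  then obtain I where I: "I \<subseteq> F" "pairwise disjnt I"
    "(\<Sum>A\<in>F. w A) \<le> (4 * exp 1 * c + 1) * k * card I"
    using disjoint_subfamily_weight[OF subset_refl assms(3) \<open>0 < k\<close>] by blast
  have "(4 * exp 1 * c + 1) * k = (\<Sum>B\<in>F. w B) / p"
    using \<open>0 < 4 * exp 1 * c + 1\<close> by (simp add: k_def)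
  then have "(\<Sum>B\<in>F. w B) * 1 \<le> (\<Sum>B\<in>F. w B) * (card I / p)"
    using I(3) by simp
  then have "p \<le> card I"
    using assms(2,4) by (simp add: mult_le_cancel_left_pos divide_simps)
  moreover have "card I < p"
    using assms(1) I(1,2) finite_F finite_subset by (blast intro: p2_property_card_disjoint_lt)
  ultimately show False by simp
qed

text \<open>Multiplicative weights: each new point is a deep point for the weights \<open>2 ^ - hits\<close>, and adding it
  removes at least a \<open>1 / (2 (4 e c + 1) p)\<close> fraction of the total weight.\<close>
lemma exists_points_halving_weights:
  assumes "p2_property p F" "1 \<le> p" "F \<noteq> {}"
  shows "\<exists>xs. length xs = t \<and> set xs \<subseteq> P \<and>
    (\<Sum>B\<in>F. (1/2::real) ^ hits xs B) \<le> card F * (1 - 1 / (2 * ((4 * exp 1 * c + 1) * p))) ^ t"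
proof (induction t)
  case 0
  show ?case by (simp add: hits_def)
next
  case (Suc t)
  define \<kappa> where "\<kappa> = (4 * exp 1 * c + 1) * p"
  have "1 \<le> \<kappa>"
    unfolding \<kappa>_def using c_nonneg assms(2) mult_mono[of 1 "4 * exp 1 * c + 1" 1 "real p"] by simp
  obtain xs where xs: "length xs = t" "set xs \<subseteq> P"
    "(\<Sum>B\<in>F. (1/2::real) ^ hits xs B) \<le> card F * (1 - 1 / (2 * \<kappa>)) ^ t"
    using Suc.IH unfolding \<kappa>_def by blast
  define w where "w B = (1/2::real) ^ hits xs B" for B
  have "0 < (\<Sum>B\<in>F. w B)"
    using assms(3) finite_F by (intro sum_pos) (auto simp: w_def)
  then obtain x where x: "x \<in> P" "(\<Sum>B\<in>F. w B) / \<kappa> < weighted_depth F w x"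
    using exists_deep_point[OF assms(1,2), of w] unfolding \<kappa>_def by (auto simp: w_def)
  have "(\<Sum>B\<in>F. (1/2::real) ^ hits (xs @ [x]) B) = (\<Sum>B\<in>F. w B - (if x \<in> B then w B / 2 else 0))"
    by (intro sum.cong refl) (auto simp: hits_snoc w_def)
  also have "\<dots> = (\<Sum>B\<in>F. w B) - weighted_depth F w x / 2"
    using finite_F by (simp add: sum_subtractf sum.If_cases Int_def sum_divide_distrib weighted_depth_def)
  also have "\<dots> \<le> (\<Sum>B\<in>F. w B) * (1 - 1 / (2 * \<kappa>))"
    using x(2) by (simp add: field_simps)
  also have "\<dots> \<le> card F * (1 - 1 / (2 * \<kappa>)) ^ Suc t"
    using xs(3) \<open>1 \<le> \<kappa>\<close> by (simp add: w_def mult_right_mono)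
  finally show ?case
    using xs x(1) unfolding \<kappa>_def by (intro exI[of _ "xs @ [x]"]) auto
qed

lemma exists_fractional_transversal:
  assumes "p2_property p F" "1 \<le> p" "F \<noteq> {}"
  shows "\<exists>xs. xs \<noteq> [] \<and> set xs \<subseteq> P \<and>
    (\<forall>B\<in>F. length xs \<le> 4 * ((4 * exp 1 * c + 1) * p) * hits xs B)"
proof -
  define \<kappa> where "\<kappa> = (4 * exp 1 * c + 1) * p"
  have "1 \<le> \<kappa>"
    unfolding \<kappa>_def using c_nonneg assms(2) mult_mono[of 1 "4 * exp 1 * c + 1" 1 "real p"] by simp
  define n where "n = real (card F)"
  have "1 \<le> n" using assms(3) finite_F by (simp add: n_def Suc_leI card_gt_0_iff)
  define t where "t = nat \<lceil>4 * \<kappa> * ln n\<rceil> + 1"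
  obtain xs where xs: "length xs = t" "set xs \<subseteq> P"
    "(\<Sum>B\<in>F. (1/2::real) ^ hits xs B) \<le> n * (1 - 1 / (2 * \<kappa>)) ^ t"
    using exists_points_halving_weights[OF assms] unfolding \<kappa>_def n_def by blast
  have "length xs \<le> 4 * \<kappa> * hits xs B" if "B \<in> F" for B
  proof -
    have "2 * ln n \<le> t * (1 / (2 * \<kappa>))"
      using \<open>1 \<le> \<kappa>\<close> unfolding t_def by (simp add: field_simps) linarith
    moreover have "(1/2::real) ^ hits xs B \<le> (\<Sum>B\<in>F. (1/2::real) ^ hits xs B)"
      using that finite_F by (intro member_le_sum) auto
    ultimately have "t * (1 / (2 * \<kappa>)) / 2 \<le> hits xs B"
      using \<open>1 \<le> \<kappa>\<close> \<open>1 \<le> n\<close> xs(3) by (intro halvings_lower_bound) auto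
    then show ?thesis using xs(1) \<open>1 \<le> \<kappa>\<close> by (simp add: field_simps)
  qed
  moreover have "xs \<noteq> []" using xs(1) by (auto simp: t_def)
  ultimately show ?thesis using xs(2) unfolding \<kappa>_def by blast
qed

end

section \<open>Shattered sets of positions\<close>

definition shatters :: "'b set set \<Rightarrow> 'b set \<Rightarrow> bool" where
  "shatters \<A> Y \<longleftrightarrow> (\<lambda>A. A \<inter> Y) ` \<A> = Pow Y"

definition positions :: "'b list \<Rightarrow> 'b set \<Rightarrow> nat set" where
  "positions zs B = {j. j < length zs \<and> zs ! j \<in> B}"

lemma hits_eq_card_positions: "hits zs B = card (positions zs B)"
  by (simp add: hits_def positions_def length_filter_conv_card)

lemma card_split_at_element:
  assumes "finite \<A>"
  shows "card \<A> = card ((\<lambda>A. A - {a}) ` \<A>) + card {A \<in> \<A>. a \<notin> A \<and> insert a A \<in> \<A>}"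
proof -
  define An where "An = {A \<in> \<A>. a \<notin> A}"
  define Ay where "Ay = {A \<in> \<A>. a \<in> A}"
  have "inj_on (\<lambda>A. A - {a}) Ay"
  proof (rule inj_onI)
    fix X Y assume "X \<in> Ay" "Y \<in> Ay" "X - {a} = Y - {a}"
    moreover have "a \<in> X" "a \<in> Y" using \<open>X \<in> Ay\<close> \<open>Y \<in> Ay\<close> by (simp_all add: Ay_def)
    ultimately show "X = Y" by blast
  qed
  then have card_Ay: "card ((\<lambda>A. A - {a}) ` Ay) = card Ay" by (rule card_image)
  have "(\<lambda>A. A - {a}) ` \<A> = An \<union> (\<lambda>A. A - {a}) ` Ay"
  proof (intro equalityI subsetI)
    fix X assume "X \<in> (\<lambda>A. A - {a}) ` \<A>"
    then obtain A where "A \<in> \<A>" "X = A - {a}" by blast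
    then show "X \<in> An \<union> (\<lambda>A. A - {a}) ` Ay"
      by (cases "a \<in> A") (simp_all add: An_def Ay_def)
  next
    fix X assume "X \<in> An \<union> (\<lambda>A. A - {a}) ` Ay"
    moreover have "X = X - {a}" if "X \<in> An" using that by (simp add: An_def)
    ultimately show "X \<in> (\<lambda>A. A - {a}) ` \<A>" unfolding An_def Ay_def by blast
  qed
  moreover have "{A \<in> \<A>. a \<notin> A \<and> insert a A \<in> \<A>} = An \<inter> (\<lambda>A. A - {a}) ` Ay"
  proof (intro equalityI subsetI)
    fix X assume X: "X \<in> {A \<in> \<A>. a \<notin> A \<and> insert a A \<in> \<A>}"
    then have "X \<in> An" "insert a X \<in> Ay" "X = insert a X - {a}" by (auto simp: An_def Ay_def)
    then show "X \<in> An \<inter> (\<lambda>A. A - {a}) ` Ay" by blast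
  next
    fix X assume "X \<in> An \<inter> (\<lambda>A. A - {a}) ` Ay"
    then obtain A where "X \<in> \<A>" "a \<notin> X" "A \<in> \<A>" "a \<in> A" "X = A - {a}"
      unfolding An_def Ay_def by blast
    then show "X \<in> {A \<in> \<A>. a \<notin> A \<and> insert a A \<in> \<A>}" by (simp add: insert_absorb)
  qed
  moreover have "finite An" "finite Ay" using assms by (simp_all add: An_def Ay_def)
  moreover have "card \<A> = card An + card Ay"
  proof -
    have "\<A> = An \<union> Ay" "An \<inter> Ay = {}" unfolding An_def Ay_def by blast+
    then show ?thesis using \<open>finite An\<close> \<open>finite Ay\<close> by (simp add: card_Un_disjoint)
  qed
  ultimately show ?thesis
    using card_Ay card_Un_Int[of An "(\<lambda>A. A - {a}) ` Ay"] by simp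
qed

lemma shatters_image_remove:
  assumes "a \<notin> Y" "shatters ((\<lambda>A. A - {a}) ` \<A>) Y"
  shows "shatters \<A> Y"
proof -
  have "(\<lambda>A. A \<inter> Y) ` ((\<lambda>A. A - {a}) ` \<A>) = (\<lambda>A. A \<inter> Y) ` \<A>"
    unfolding image_image using assms(1) by (intro image_cong refl) auto
  then show ?thesis using assms(2) by (simp add: shatters_def)
qed

lemma shatters_insert:
  assumes "a \<notin> Y" "shatters {A \<in> \<A>. a \<notin> A \<and> insert a A \<in> \<A>} Y"
  shows "shatters \<A> (insert a Y)"
  unfolding shatters_def
proof (intro equalityI subsetI)
  fix Z assume "Z \<in> Pow (insert a Y)"
  then have "Z - {a} \<in> (\<lambda>A. A \<inter> Y) ` {A \<in> \<A>. a \<notin> A \<and> insert a A \<in> \<A>}"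
    using assms(2) by (auto simp: shatters_def)
  then obtain A where A: "A \<in> \<A>" "a \<notin> A" "insert a A \<in> \<A>" "A \<inter> Y = Z - {a}" by blast
  show "Z \<in> (\<lambda>A. A \<inter> insert a Y) ` \<A>"
  proof (cases "a \<in> Z")
    case True
    then have "insert a A \<inter> insert a Y = Z" using A(4) \<open>Z \<in> Pow (insert a Y)\<close> by auto
    then show ?thesis using A(3) by (metis image_eqI)
  next
    case False
    then have "A \<inter> insert a Y = Z" using A(2,4) by auto
    then show ?thesis using A(1) by (metis image_eqI)
  qed
qed auto

text \<open>Pajor's lemma, the sharp form of the Sauer--Shelah lemma.\<close>
lemma card_le_card_shattered:
  assumes "finite U" "\<A> \<subseteq> Pow U"
  shows "card \<A> \<le> card {Y. Y \<subseteq> U \<and> shatters \<A> Y}"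
  using assms
proof (induction U arbitrary: \<A> rule: finite_induct)
  case empty
  then have "\<A> \<subseteq> {{}}" by auto
  then have "card \<A> \<le> 1" using card_mono[of "{{}}" \<A>] by simp
  show ?case
  proof (cases "\<A> = {}")
    case False
    then have "shatters \<A> {}" using \<open>\<A> \<subseteq> {{}}\<close> by (auto simp: shatters_def)
    then have "{Y. Y \<subseteq> {} \<and> shatters \<A> Y} = {{}}" by auto
    then show ?thesis using \<open>card \<A> \<le> 1\<close> by simp
  qed simp
next
  case (insert a U)
  define A0 where "A0 = (\<lambda>A. A - {a}) ` \<A>"
  define A1 where "A1 = {A \<in> \<A>. a \<notin> A \<and> insert a A \<in> \<A>}"
  define Sh where "Sh \<B> V = {Y. Y \<subseteq> V \<and> shatters \<B> Y}" for \<B> :: "'a set set" and V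
  have finite_Sh: "finite (Sh \<B> V)" if "finite V" for \<B> V
    using that by (rule finite_subset[rotated, OF finite_Pow_iff[THEN iffD2]]) (auto simp: Sh_def)
  have "finite \<A>"
    using insert.prems insert.hyps(1) by (meson finite_Pow_iff finite_insert finite_subset)
  then have "card \<A> = card A0 + card A1"
    unfolding A0_def A1_def by (rule card_split_at_element)
  also have "\<dots> \<le> card (Sh A0 U) + card (Sh A1 U)"
  proof (rule add_mono)
    show "card A0 \<le> card (Sh A0 U)"
      using insert.prems by (auto simp: Sh_def A0_def intro!: insert.IH)
    show "card A1 \<le> card (Sh A1 U)"
      using insert.prems insert.hyps(2) by (auto simp: Sh_def A1_def intro!: insert.IH)
  qed
  also have "card (Sh A1 U) = card (insert a ` Sh A1 U)"
  proof (rule card_image[symmetric], rule inj_onI)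
    fix Y Z assume "Y \<in> Sh A1 U" "Z \<in> Sh A1 U" "insert a Y = insert a Z"
    moreover have "a \<notin> Y" "a \<notin> Z"
      using \<open>Y \<in> Sh A1 U\<close> \<open>Z \<in> Sh A1 U\<close> insert.hyps(2) by (auto simp: Sh_def)
    ultimately show "Y = Z" by (metis Diff_insert_absorb)
  qed
  also have "card (Sh A0 U) + card (insert a ` Sh A1 U) = card (Sh A0 U \<union> insert a ` Sh A1 U)"
  proof (rule card_Un_disjoint[symmetric])
    show "finite (Sh A0 U)" "finite (insert a ` Sh A1 U)"
      using finite_Sh insert.hyps(1) by simp_all
    show "Sh A0 U \<inter> insert a ` Sh A1 U = {}"
      using insert.hyps(2) unfolding Sh_def by blast
  qed
  also have "\<dots> \<le> card (Sh \<A> (insert a U))"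
  proof (rule card_mono)
    show "finite (Sh \<A> (insert a U))" using finite_Sh insert.hyps(1) by blast
    have "Y \<in> Sh \<A> (insert a U)" if "Y \<in> Sh A0 U" for Y
      using that insert.hyps(2) shatters_image_remove[of a Y \<A>] by (auto simp: Sh_def A0_def)
    moreover have "insert a Y \<in> Sh \<A> (insert a U)" if "Y \<in> Sh A1 U" for Y
      using that insert.hyps(2) shatters_insert[of a Y \<A>] by (auto simp: Sh_def A1_def)
    ultimately show "Sh A0 U \<union> insert a ` Sh A1 U \<subseteq> Sh \<A> (insert a U)" by blast
  qed
  finally show ?case by (simp add: Sh_def)
qed

lemma card_subsets_card_le:
  assumes "finite U"
  shows "card {Y. Y \<subseteq> U \<and> card Y \<le> t} \<le> (card U + 1) ^ t"
proof -
  define L where "L = {xs. set xs \<subseteq> insert None (Some ` U) \<and> length xs = t}"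
  define elems where "elems xs = {u. Some u \<in> set xs}" for xs :: "'a option list"
  have finite_L: "finite L"
    using assms by (auto simp: L_def finite_lists_length_eq)
  have "{Y. Y \<subseteq> U \<and> card Y \<le> t} \<subseteq> elems ` L"
  proof
    fix Y assume Y: "Y \<in> {Y. Y \<subseteq> U \<and> card Y \<le> t}"
    then obtain ys where ys: "set ys = Y" "distinct ys"
      using assms finite_distinct_list finite_subset by (metis mem_Collect_eq)
    then have "length ys \<le> t" using Y distinct_card by fastforce
    then have "map Some ys @ replicate (t - length ys) None \<in> L"
      using ys Y by (auto simp: L_def)
    moreover have "elems (map Some ys @ replicate (t - length ys) None) = Y"
      using ys by (auto simp: elems_def)
    ultimately show "Y \<in> elems ` L" by (metis image_eqI)
  qed
  then have "card {Y. Y \<subseteq> U \<and> card Y \<le> t} \<le> card (elems ` L)"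
    using finite_L by (intro card_mono) auto
  also have "\<dots> \<le> card L" using finite_L by (rule card_image_le)
  also have "card L = (card U + 1) ^ t"
    using assms card_lists_length_eq[of "insert None (Some ` U)" t]
    by (simp add: L_def card_image)
  finally show ?thesis .
qed

lemma shattered_by_positions_subset:
  assumes "shatters (positions zs ` F) Y"
  shows "Y \<subseteq> {..<length zs}"
proof -
  have "Y \<in> (\<lambda>A. A \<inter> Y) ` positions zs ` F" using assms by (simp add: shatters_def)
  then show ?thesis by (auto simp: positions_def)
qed

text \<open>A bijection \<open>g\<close> from the \<open>2\<close>-subsets of \<open>{..<q}\<close> into \<open>Y\<close> is fixed, and \<open>Bf a\<close> is a region
  whose trace on \<open>Y\<close> is the image of the pairs containing \<open>a\<close>; the point at position \<open>g \<pi>\<close>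
  then lies in exactly the regions indexed by \<open>\<pi>\<close>.\<close>
lemma shattered_positions_realize_pairs:
  fixes zs :: "'b list" and F :: "'b set set"
  assumes "shatters (positions zs ` F) Y" "q choose 2 \<le> card Y"
  shows "\<exists>Bf. Bf ` {..<q} \<subseteq> F \<and>
    (\<forall>\<pi>. \<pi> \<subseteq> {..<q} \<and> card \<pi> = 2 \<longrightarrow> (\<exists>x\<in>set zs. \<forall>a<q. x \<in> Bf a \<longleftrightarrow> a \<in> \<pi>))"
proof -
  have Y_sub: "Y \<subseteq> {..<length zs}" using assms(1) by (rule shattered_by_positions_subset)
  obtain Y' where Y': "Y' \<subseteq> Y" "card Y' = q choose 2"
    using assms(2) by (rule obtain_subset_with_card_n)
  define Pairs where "Pairs = {\<pi>. \<pi> \<subseteq> {..<q} \<and> card \<pi> = 2}"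
  have "finite Pairs" unfolding Pairs_def by (rule finite_subset[of _ "Pow {..<q}"]) auto
  have "card Pairs = q choose 2" unfolding Pairs_def using n_subsets[of "{..<q}" 2] by simp
  have "finite Y" using Y_sub by (rule finite_subset) simp
  then have "finite Y'" using Y'(1) by (rule finite_subset[rotated])
  then obtain g where g: "bij_betw g Pairs Y'"
    using finite_same_card_bij[OF \<open>finite Pairs\<close>] \<open>card Pairs = q choose 2\<close> Y'(2) by metis
  have "\<forall>a. \<exists>B. B \<in> F \<and> positions zs B \<inter> Y = g ` {\<pi> \<in> Pairs. a \<in> \<pi>}"
  proof
    fix a
    have "g ` {\<pi> \<in> Pairs. a \<in> \<pi>} \<in> Pow Y"
      using g Y'(1) unfolding bij_betw_def by auto
    then have "g ` {\<pi> \<in> Pairs. a \<in> \<pi>} \<in> (\<lambda>A. A \<inter> Y) ` positions zs ` F"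
      using assms(1) by (simp add: shatters_def)
    then obtain A where "A \<in> positions zs ` F" "g ` {\<pi> \<in> Pairs. a \<in> \<pi>} = A \<inter> Y"
      by (rule imageE)
    moreover from this(1) obtain B where "B \<in> F" "A = positions zs B" by (rule imageE)
    ultimately show "\<exists>B. B \<in> F \<and> positions zs B \<inter> Y = g ` {\<pi> \<in> Pairs. a \<in> \<pi>}" by auto
  qed
  from choice[OF this] obtain Bf
    where "\<forall>a. Bf a \<in> F \<and> positions zs (Bf a) \<inter> Y = g ` {\<pi> \<in> Pairs. a \<in> \<pi>}" ..
  then have Bf: "\<And>a. Bf a \<in> F" "\<And>a. positions zs (Bf a) \<inter> Y = g ` {\<pi> \<in> Pairs. a \<in> \<pi>}"
    by simp_all
  have "\<exists>x\<in>set zs. \<forall>a<q. x \<in> Bf a \<longleftrightarrow> a \<in> \<pi>" if "\<pi> \<in> Pairs" for \<pi>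
  proof
    have "g \<pi> \<in> Y" using g that Y'(1) by (auto simp: bij_betw_def)
    then have "g \<pi> < length zs" using Y_sub by auto
    then show "zs ! g \<pi> \<in> set zs" by simp
    show "\<forall>a<q. zs ! g \<pi> \<in> Bf a \<longleftrightarrow> a \<in> \<pi>"
    proof (intro allI impI)
      fix a
      have "zs ! g \<pi> \<in> Bf a \<longleftrightarrow> g \<pi> \<in> positions zs (Bf a) \<inter> Y"
        using \<open>g \<pi> < length zs\<close> \<open>g \<pi> \<in> Y\<close> by (simp add: positions_def)
      also have "\<dots> \<longleftrightarrow> a \<in> \<pi>"
        using g that unfolding Bf(2) bij_betw_def inj_on_def by blast
      finally show "zs ! g \<pi> \<in> Bf a \<longleftrightarrow> a \<in> \<pi>" .
    qed
  qed
  then show ?thesis using Bf(1) unfolding Pairs_def by blast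
qed

definition shatter_bound :: "real \<Rightarrow> nat" where
  "shatter_bound c = (nat \<lceil>2 * c\<rceil> + 3) choose 2"

context sparse_delaunay_family
begin

lemma pair_realizing_regions_bound:
  assumes "3 \<le> q" "Bf ` {..<q} \<subseteq> F"
    and realize: "\<And>\<pi>. \<pi> \<subseteq> {..<q} \<Longrightarrow> card \<pi> = 2 \<Longrightarrow> \<exists>x\<in>P. \<forall>a<q. x \<in> Bf a \<longleftrightarrow> a \<in> \<pi>"
  shows "real (q choose 2) \<le> c * q"
proof -
  have inj: "inj_on Bf {..<q}"
  proof (rule inj_onI, rule ccontr)
    fix a a' assume "a \<in> {..<q}" "a' \<in> {..<q}" "Bf a = Bf a'" "a \<noteq> a'"
    have "\<exists>b\<in>{0, 1, 2 :: nat}. b \<noteq> a \<and> b \<noteq> a'" by auto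
    then obtain b where "b \<in> {0, 1, 2}" "b \<noteq> a" "b \<noteq> a'" by blast
    then have "b < q" using assms(1) by auto
    then obtain x where "x \<in> P" and x: "\<forall>a''<q. x \<in> Bf a'' \<longleftrightarrow> a'' \<in> {a, b}"
      using realize[of "{a, b}"] \<open>a \<in> {..<q}\<close> \<open>b \<noteq> a\<close> by auto
    then have "x \<in> Bf a'" using \<open>a \<in> {..<q}\<close> \<open>Bf a = Bf a'\<close> by auto
    then show False using x \<open>a' \<in> {..<q}\<close> \<open>a \<noteq> a'\<close> \<open>b \<noteq> a'\<close> by auto
  qed
  define S where "S = Bf ` {..<q}"
  define Pairs where "Pairs = {\<pi>. \<pi> \<subseteq> {..<q} \<and> card \<pi> = 2}"
  let ?D = "delaunay_edges (restrict_edges (dual_hyperedges P F) S)"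
  have "image Bf ` Pairs \<subseteq> ?D"
  proof
    fix e assume "e \<in> image Bf ` Pairs"
    then obtain \<pi> where \<pi>: "\<pi> \<subseteq> {..<q}" "card \<pi> = 2" "e = Bf ` \<pi>"
      unfolding Pairs_def by blast
    obtain u v where "\<pi> = {u, v}" "u \<noteq> v"
      using \<pi>(2) by (auto simp: card_2_iff)
    obtain x where "x \<in> P" and x: "\<forall>a<q. x \<in> Bf a \<longleftrightarrow> a \<in> \<pi>"
      using realize \<pi>(1,2) by blast
    have "{C \<in> S. x \<in> C} = Bf ` \<pi>"
      using x \<pi>(1) unfolding S_def lessThan_def by blast
    moreover have "Bf u \<noteq> Bf v"
      using inj \<pi>(1) \<open>\<pi> = {u, v}\<close> \<open>u \<noteq> v\<close> by (auto dest: inj_onD)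
    moreover have "S \<subseteq> F" using assms(2) by (simp add: S_def)
    ultimately have "{Bf u, Bf v} \<in> ?D"
      using \<open>x \<in> P\<close> \<open>\<pi> = {u, v}\<close> by (intro delaunay_edgeI) simp_all
    then show "e \<in> ?D" using \<pi>(3) \<open>\<pi> = {u, v}\<close> by simp
  qed
  moreover have "finite ?D"
    by (rule finite_subset[of _ "Pow S"]) (auto simp: delaunay_edges_def restrict_edges_def S_def)
  ultimately have "card (image Bf ` Pairs) \<le> card ?D" by (rule card_mono[rotated])
  moreover have "card (image Bf ` Pairs) = q choose 2"
  proof -
    have "inj_on (image Bf) Pairs"
      using inj_on_image_Pow[OF inj] by (rule inj_on_subset) (auto simp: Pairs_def)
    then show ?thesis using n_subsets[of "{..<q}" 2] by (simp add: card_image Pairs_def)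
  qed
  ultimately have "real (q choose 2) \<le> real (card ?D)" by simp
  also have "\<dots> \<le> c * card S" using sparse assms(2) by (simp add: S_def)
  also have "card S = q" using inj by (simp add: S_def card_image)
  finally show ?thesis .
qed

lemma card_shattered_positions_lt:
  assumes "set zs \<subseteq> P" "shatters (positions zs ` F) Y"
  shows "card Y < shatter_bound c"
proof (rule ccontr)
  define q where "q = nat \<lceil>2 * c\<rceil> + 3"
  assume "\<not> card Y < shatter_bound c"
  then have "q choose 2 \<le> card Y" by (simp add: shatter_bound_def q_def)
  from shattered_positions_realize_pairs[OF assms(2) this] obtain Bf where "Bf ` {..<q} \<subseteq> F \<and>
    (\<forall>\<pi>. \<pi> \<subseteq> {..<q} \<and> card \<pi> = 2 \<longrightarrow> (\<exists>x\<in>set zs. \<forall>a<q. x \<in> Bf a \<longleftrightarrow> a \<in> \<pi>))" ..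
  then have "Bf ` {..<q} \<subseteq> F"
    and "\<And>\<pi>. \<pi> \<subseteq> {..<q} \<Longrightarrow> card \<pi> = 2 \<Longrightarrow> \<exists>x\<in>P. \<forall>a<q. x \<in> Bf a \<longleftrightarrow> a \<in> \<pi>"
    using assms(1) by blast+
  then have le: "real (q choose 2) \<le> c * q"
    by (intro pair_realizing_regions_bound) (simp_all add: q_def)
  have "real (2 * (q choose 2)) = real q * (real q - 1)"
    by (cases q) (simp_all add: choose_two algebra_simps)
  moreover have "2 * c + 2 \<le> real q - 1" using c_nonneg unfolding q_def by linarith
  ultimately have "real q * (2 * c + 2) \<le> 2 * real (q choose 2)"
    by (simp add: mult_left_mono)
  then show False using le by (simp add: q_def algebra_simps)
qed

lemma card_positions_image_le:
  assumes "set zs \<subseteq> P"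
  shows "card (positions zs ` F) \<le> (length zs + 1) ^ shatter_bound c"
proof -
  have "card (positions zs ` F) \<le> card {Y. Y \<subseteq> {..<length zs} \<and> shatters (positions zs ` F) Y}"
    by (rule card_le_card_shattered) (auto simp: positions_def)
  also have "\<dots> \<le> card {Y. Y \<subseteq> {..<length zs} \<and> card Y \<le> shatter_bound c}"
    using card_shattered_positions_lt[OF assms] by (intro card_mono) (auto simp: less_imp_le)
  also have "\<dots> \<le> (length zs + 1) ^ shatter_bound c"
    using card_subsets_card_le[of "{..<length zs}"] by simp
  finally show ?thesis .
qed

end

section \<open>\<open>\<epsilon>\<close>-nets by double sampling\<close>

text \<open>Samples with replacement of \<open>s\<close> positions of a list of length \<open>T\<close> are modelled as lists of
  indices; probabilities become proportions of the \<open>T ^ s\<close> such lists.\<close>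
definition index_lists :: "nat \<Rightarrow> nat \<Rightarrow> nat list set" where
  "index_lists T s = {N. set N \<subseteq> {..<T} \<and> length N = s}"

lemma finite_index_lists: "finite (index_lists T s)"
  unfolding index_lists_def by (rule finite_lists_length_eq) simp

lemma card_index_lists: "card (index_lists T s) = T ^ s"
  unfolding index_lists_def using card_lists_length_eq[of "{..<T}" s] by simp

lemma sum_index_lists_Suc:
  "(\<Sum>N\<in>index_lists T (Suc s). f N) = (\<Sum>n<T. \<Sum>N\<in>index_lists T s. f (n # N))"
proof -
  have Suc_eq: "index_lists T (Suc s) = (\<lambda>(n, N). n # N) ` ({..<T} \<times> index_lists T s)"
    by (auto simp: index_lists_def length_Suc_conv image_iff)
  have "inj_on (\<lambda>(n, N). n # N) ({..<T} \<times> index_lists T s)" by (auto simp: inj_on_def)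
  then have "(\<Sum>N\<in>index_lists T (Suc s). f N) = (\<Sum>(n, N)\<in>{..<T} \<times> index_lists T s. f (n # N))"
    unfolding Suc_eq by (subst sum.reindex) (auto simp: case_prod_unfold)
  also have "\<dots> = (\<Sum>n<T. \<Sum>N\<in>index_lists T s. f (n # N))"
    by (rule sum.cartesian_product[symmetric])
  finally show ?thesis .
qed

lemma sum_sum_square_add:
  fixes u :: "'b \<Rightarrow> real" and v :: "'c \<Rightarrow> real"
  shows "(\<Sum>n\<in>A. \<Sum>N\<in>B. (u n + v N)\<^sup>2)
    = card B * (\<Sum>n\<in>A. (u n)\<^sup>2) + 2 * (\<Sum>n\<in>A. u n) * (\<Sum>N\<in>B. v N) + card A * (\<Sum>N\<in>B. (v N)\<^sup>2)"
  by (simp add: power2_sum sum.distrib sum_distrib_left sum_distrib_right mult.assoc) (rule sum.swap)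

lemma sum_sq_deviation_hits:
  fixes T :: nat and r :: "nat set" and q :: real
  assumes "0 < T" and q_def: "q = real (card ({..<T} \<inter> r)) / T"
  shows "(\<Sum>N\<in>index_lists T s. (real (hits N r) - s * q)\<^sup>2) = s * q * (1 - q) * T ^ s"
proof (induction s)
  case 0
  have "index_lists T 0 = {[]}" by (auto simp: index_lists_def)
  then show ?case by (simp add: hits_def)
next
  case (Suc s)
  define u where "u n = (if n \<in> r then 1 else 0) - q" for n
  define v where "v N = real (hits N r) - s * q" for N
  have card_r: "real (card ({..<T} \<inter> r)) = T * q" using \<open>0 < T\<close> by (simp add: q_def)
  have "(\<Sum>n<T. u n) = 0"
    using card_r by (simp add: u_def sum_subtractf sum.If_cases)
  moreover have "(\<Sum>n<T. (u n)\<^sup>2) = T * q * (1 - q)"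
  proof -
    have "(u n)\<^sup>2 = (if n \<in> r then 1 else 0) * (1 - 2 * q) + q\<^sup>2" for n
      by (simp add: u_def power2_eq_square algebra_simps)
    then have "(\<Sum>n<T. (u n)\<^sup>2) = real (card ({..<T} \<inter> r)) * (1 - 2 * q) + T * q\<^sup>2"
      by (simp add: sum.distrib sum_distrib_right[symmetric] sum.If_cases)
    then show ?thesis using card_r by (simp add: power2_eq_square algebra_simps)
  qed
  moreover have "(\<Sum>N\<in>index_lists T (Suc s). (real (hits N r) - Suc s * q)\<^sup>2)
      = (\<Sum>n<T. \<Sum>N\<in>index_lists T s. (u n + v N)\<^sup>2)"
    unfolding sum_index_lists_Suc by (intro sum.cong refl) (simp add: hits_def u_def v_def algebra_simps)
  moreover note sum_sum_square_add[where u = u and v = v and A = "{..<T}" and B = "index_lists T s"]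
  ultimately have "(\<Sum>N\<in>index_lists T (Suc s). (real (hits N r) - Suc s * q)\<^sup>2)
      = T ^ s * (T * q * (1 - q)) + T * (s * q * (1 - q) * T ^ s)"
    using Suc.IH by (simp add: card_index_lists v_def)
  then show ?case by (simp add: algebra_simps)
qed

lemma card_few_hits_le_half:
  fixes T s :: nat and r :: "nat set"
  assumes "0 < T" and big: "8 \<le> s * real (card ({..<T} \<inter> r)) / T"
  shows "real (card {N \<in> index_lists T s. hits N r < s * real (card ({..<T} \<inter> r)) / T / 2})
    \<le> T ^ s / 2"
proof -
  define q where "q = real (card ({..<T} \<inter> r)) / T"
  define \<mu> where "\<mu> = s * q"
  have "8 \<le> \<mu>" using big by (simp add: \<mu>_def q_def)
  have "0 \<le> q" "q \<le> 1"
    using \<open>0 < T\<close> card_mono[of "{..<T}" "{..<T} \<inter> r"] by (auto simp: q_def)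
  define Few where "Few = {N \<in> index_lists T s. hits N r < \<mu> / 2}"
  have "card Few * (\<mu> / 2)\<^sup>2 = (\<Sum>N\<in>Few. (\<mu> / 2)\<^sup>2)" by simp
  also have "\<dots> \<le> (\<Sum>N\<in>Few. (hits N r - \<mu>)\<^sup>2)"
  proof (rule sum_mono)
    fix N assume "N \<in> Few"
    then have "\<mu> / 2 \<le> \<mu> - hits N r" "0 \<le> \<mu> / 2" using \<open>8 \<le> \<mu>\<close> by (auto simp: Few_def)
    then show "(\<mu> / 2)\<^sup>2 \<le> (hits N r - \<mu>)\<^sup>2" by (simp add: power2_commute power_mono)
  qed
  also have "\<dots> \<le> (\<Sum>N\<in>index_lists T s. (hits N r - \<mu>)\<^sup>2)"
    by (rule sum_mono2[OF finite_index_lists]) (auto simp: Few_def)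
  also have "\<dots> = s * q * (1 - q) * T ^ s"
    unfolding \<mu>_def using sum_sq_deviation_hits[OF \<open>0 < T\<close> q_def] by simp
  also have "\<dots> \<le> \<mu> * T ^ s"
    using \<open>0 \<le> q\<close> \<open>q \<le> 1\<close> by (simp add: \<mu>_def mult_left_le mult_right_mono)
  finally have "(card Few * (\<mu> / 4)) * \<mu> \<le> T ^ s * \<mu>"
    by (simp add: power2_eq_square mult_ac)
  then have "card Few * (\<mu> / 4) \<le> T ^ s" using \<open>8 \<le> \<mu>\<close> by simp
  moreover have "real (card Few) * 2 \<le> card Few * (\<mu> / 4)"
    using \<open>8 \<le> \<mu>\<close> by (intro mult_left_mono) auto
  ultimately show ?thesis by (simp add: Few_def \<mu>_def q_def)
qed

definition swap_at :: "nat set \<Rightarrow> nat \<Rightarrow> nat list \<times> nat list \<Rightarrow> nat list \<times> nat list" where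
  "swap_at \<sigma> s z =
    (map (\<lambda>i. if i \<in> \<sigma> then snd z ! i else fst z ! i) [0..<s],
     map (\<lambda>i. if i \<in> \<sigma> then fst z ! i else snd z ! i) [0..<s])"

lemma swap_at_nth:
  assumes "i < s"
  shows "fst (swap_at \<sigma> s z) ! i = (if i \<in> \<sigma> then snd z ! i else fst z ! i)"
    and "snd (swap_at \<sigma> s z) ! i = (if i \<in> \<sigma> then fst z ! i else snd z ! i)"
  using assms by (simp_all add: swap_at_def)

lemma swap_at_mem:
  assumes "z \<in> index_lists T s \<times> index_lists T s"
  shows "swap_at \<sigma> s z \<in> index_lists T s \<times> index_lists T s"
proof -
  obtain N M where z: "z = (N, M)" "set N \<subseteq> {..<T}" "length N = s" "set M \<subseteq> {..<T}" "length M = s"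
    using assms by (auto simp: index_lists_def)
  then have "N ! i < T" "M ! i < T" if "i < s" for i
    using that nth_mem by (metis lessThan_iff subsetD)+
  then show ?thesis by (auto simp: swap_at_def index_lists_def z)
qed

lemma swap_at_swap_at:
  assumes "z \<in> index_lists T s \<times> index_lists T s"
  shows "swap_at \<sigma> s (swap_at \<sigma> s z) = z"
proof -
  obtain N M where z: "z = (N, M)" "length N = s" "length M = s"
    using assms by (auto simp: index_lists_def)
  have "fst (swap_at \<sigma> s (swap_at \<sigma> s z)) = N" "snd (swap_at \<sigma> s (swap_at \<sigma> s z)) = M"
    by (rule nth_equalityI; simp add: swap_at_def z)+
  then show ?thesis using z(1) by (metis prod.collapse)
qed

lemma card_swap_at_preimage:
  assumes "Bad \<subseteq> index_lists T s \<times> index_lists T s"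
  shows "card {z \<in> index_lists T s \<times> index_lists T s. swap_at \<sigma> s z \<in> Bad} = card Bad"
proof -
  have "{z \<in> index_lists T s \<times> index_lists T s. swap_at \<sigma> s z \<in> Bad} = swap_at \<sigma> s ` Bad"
  proof (intro equalityI subsetI)
    fix z assume "z \<in> {z \<in> index_lists T s \<times> index_lists T s. swap_at \<sigma> s z \<in> Bad}"
    then show "z \<in> swap_at \<sigma> s ` Bad"
      using swap_at_swap_at[of z T s \<sigma>] by (metis (no_types, lifting) image_eqI mem_Collect_eq)
  next
    fix y assume "y \<in> swap_at \<sigma> s ` Bad"
    then obtain z where "z \<in> Bad" "y = swap_at \<sigma> s z" by blast
    then show "y \<in> {z \<in> index_lists T s \<times> index_lists T s. swap_at \<sigma> s z \<in> Bad}"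
      using assms swap_at_mem[of z T s \<sigma>] swap_at_swap_at[of z T s \<sigma>] by auto
  qed
  moreover have "inj_on (swap_at \<sigma> s) Bad"
    using assms swap_at_swap_at[of _ T s \<sigma>] by (metis inj_onI subsetD)
  ultimately show ?thesis by (simp add: card_image)
qed

lemma card_subsets_agreeing_le:
  fixes \<theta> :: real
  assumes "U \<subseteq> {..<s}" "\<theta> \<le> card U"
  shows "real (card {\<sigma> \<in> Pow {..<s}. \<forall>i\<in>U. i \<in> \<sigma> \<longleftrightarrow> i \<in> t}) \<le> 2 ^ s / 2 powr \<theta>"
proof -
  have "{\<sigma> \<in> Pow {..<s}. \<forall>i\<in>U. i \<in> \<sigma> \<longleftrightarrow> i \<in> t} \<subseteq> (\<lambda>\<tau>. \<tau> \<union> (U \<inter> t)) ` Pow ({..<s} - U)"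
  proof
    fix \<sigma> assume \<sigma>: "\<sigma> \<in> {\<sigma> \<in> Pow {..<s}. \<forall>i\<in>U. i \<in> \<sigma> \<longleftrightarrow> i \<in> t}"
    then have "\<sigma> = (\<sigma> - U) \<union> (U \<inter> t)" by auto
    moreover have "\<sigma> - U \<in> Pow ({..<s} - U)" using \<sigma> by auto
    ultimately show "\<sigma> \<in> (\<lambda>\<tau>. \<tau> \<union> (U \<inter> t)) ` Pow ({..<s} - U)" by blast
  qed
  then have "card {\<sigma> \<in> Pow {..<s}. \<forall>i\<in>U. i \<in> \<sigma> \<longleftrightarrow> i \<in> t} \<le> card ((\<lambda>\<tau>. \<tau> \<union> (U \<inter> t)) ` Pow ({..<s} - U))"
    by (intro card_mono) simp_all
  also have "\<dots> \<le> card (Pow ({..<s} - U))" by (rule card_image_le) simp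
  also have "\<dots> = 2 ^ (s - card U)"
    using assms(1) by (simp add: card_Pow card_Diff_subset finite_subset)
  finally have "real (card {\<sigma> \<in> Pow {..<s}. \<forall>i\<in>U. i \<in> \<sigma> \<longleftrightarrow> i \<in> t}) \<le> real (2 ^ (s - card U))"
    by (simp only: of_nat_le_iff)
  also have "\<dots> = (2::real) ^ (s - card U)" by simp
  also have "\<dots> = 2 ^ s / 2 ^ card U"
    using card_mono[OF _ assms(1)] by (simp add: power_diff)
  also have "\<dots> \<le> 2 ^ s / 2 powr \<theta>"
    using assms(2) by (intro divide_left_mono) (auto simp: powr_realpow[symmetric])
  finally show ?thesis .
qed

lemma swapped_miss_forces_choice:
  fixes t \<sigma> :: "nat set"
  assumes "\<forall>i<s. if i \<in> \<sigma> then s + i \<notin> t else i \<notin> t"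
  shows "{i. i < s \<and> (if i \<in> \<sigma> then i \<in> t else s + i \<in> t)} \<subseteq> {i. i < s \<and> (i \<in> t \<longleftrightarrow> s + i \<notin> t)}"
    and "\<forall>i. i < s \<and> (i \<in> t \<longleftrightarrow> s + i \<notin> t) \<longrightarrow> (i \<in> \<sigma> \<longleftrightarrow> i \<in> t)"
  using assms by (auto split: if_splits)

text \<open>For a fixed pair of samples, a swap pattern \<open>\<sigma>\<close> can only make a region \<open>B\<close> missed by the
  first and hit \<open>\<theta>\<close> times by the second sample if \<open>B\<close> meets at least \<open>\<theta>\<close> of the \<open>s\<close> swapped
  pairs in exactly one point, and then \<open>\<sigma>\<close> is forced on those pairs. Only the positions of the
  \<open>2 s\<close> sampled points inside \<open>B\<close> matter, so the trace bound controls the number of regions.\<close>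
lemma card_bad_swaps_le:
  fixes xs :: "'a list" and F :: "'a set set"
  assumes "set xs \<subseteq> P" "finite F"
    and trace_bound: "\<forall>zs. set zs \<subseteq> P \<longrightarrow> card (positions zs ` F) \<le> (length zs + 1) ^ D"
    and Bad_def: "Bad = {z \<in> index_lists (length xs) s \<times> index_lists (length xs) s.
      \<exists>B\<in>F. (\<forall>i<s. xs ! (fst z ! i) \<notin> B) \<and> \<theta> \<le> real (card {i. i < s \<and> xs ! (snd z ! i) \<in> B})}"
    and "z \<in> index_lists (length xs) s \<times> index_lists (length xs) s"
  shows "real (card {\<sigma> \<in> Pow {..<s}. swap_at \<sigma> s z \<in> Bad}) \<le> real ((2 * s + 1) ^ D) * 2 ^ s / 2 powr \<theta>"
proof -
  obtain N M where z: "z = (N, M)" "set N \<subseteq> {..<length xs}" "length N = s"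
    "set M \<subseteq> {..<length xs}" "length M = s"
    using assms(5) by (auto simp: index_lists_def)
  define zs where "zs = map ((!) xs) (N @ M)"
  have "length zs = 2 * s" using z by (simp add: zs_def)
  have "set zs \<subseteq> P"
    using z(2,4) assms(1) nth_mem by (fastforce simp: zs_def)
  have pos_N: "i \<in> positions zs B \<longleftrightarrow> xs ! (N ! i) \<in> B" if "i < s" for i B
    using that z(3,5) by (simp add: positions_def zs_def nth_append)
  have pos_M: "s + i \<in> positions zs B \<longleftrightarrow> xs ! (M ! i) \<in> B" if "i < s" for i B
    using that z(3,5) by (simp add: positions_def zs_def nth_append)
  define split_pairs where "split_pairs t = {i. i < s \<and> (i \<in> t \<longleftrightarrow> s + i \<notin> t)}" for t
  define forced where "forced t = {\<sigma> \<in> Pow {..<s}. \<forall>i\<in>split_pairs t. i \<in> \<sigma> \<longleftrightarrow> i \<in> t}" for t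
  define Ts where "Ts = {t \<in> positions zs ` F. \<theta> \<le> real (card (split_pairs t))}"
  have bad_forced: "{\<sigma> \<in> Pow {..<s}. swap_at \<sigma> s z \<in> Bad} \<subseteq> (\<Union>t\<in>Ts. forced t)"
  proof
    fix \<sigma> assume \<sigma>: "\<sigma> \<in> {\<sigma> \<in> Pow {..<s}. swap_at \<sigma> s z \<in> Bad}"
    then obtain B where B: "B \<in> F" "\<forall>i<s. xs ! (fst (swap_at \<sigma> s z) ! i) \<notin> B"
      "\<theta> \<le> real (card {i. i < s \<and> xs ! (snd (swap_at \<sigma> s z) ! i) \<in> B})"
      using Bad_def by auto
    define t where "t = positions zs B"
    have miss: "\<forall>i<s. if i \<in> \<sigma> then s + i \<notin> t else i \<notin> t"
    proof (intro allI impI)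
      fix i assume "i < s"
      then have "xs ! (fst (swap_at \<sigma> s z) ! i) \<notin> B" using B(2) by blast
      then show "if i \<in> \<sigma> then s + i \<notin> t else i \<notin> t"
        using \<open>i < s\<close> by (cases "i \<in> \<sigma>") (simp_all add: swap_at_nth z(1) t_def pos_N pos_M)
    qed
    have "{i. i < s \<and> xs ! (snd (swap_at \<sigma> s z) ! i) \<in> B}
        = {i. i < s \<and> (if i \<in> \<sigma> then i \<in> t else s + i \<in> t)}"
      using pos_N pos_M by (auto simp: swap_at_nth z(1) t_def)
    then have "card {i. i < s \<and> xs ! (snd (swap_at \<sigma> s z) ! i) \<in> B} \<le> card (split_pairs t)"
      using swapped_miss_forces_choice(1)[OF miss] unfolding split_pairs_def by (simp add: card_mono)
    then have "t \<in> Ts" using B(1,3) by (auto simp: Ts_def t_def)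
    moreover have "\<sigma> \<in> forced t"
      using \<sigma> swapped_miss_forces_choice(2)[OF miss] by (auto simp: forced_def split_pairs_def)
    ultimately show "\<sigma> \<in> (\<Union>t\<in>Ts. forced t)" by blast
  qed
  have "finite Ts" using assms(2) by (simp add: Ts_def)
  then have "finite (\<Union>t\<in>Ts. forced t)" by (simp add: forced_def)
  then have "card {\<sigma> \<in> Pow {..<s}. swap_at \<sigma> s z \<in> Bad} \<le> card (\<Union>t\<in>Ts. forced t)"
    using bad_forced by (rule card_mono)
  also have "\<dots> \<le> (\<Sum>t\<in>Ts. card (forced t))" using \<open>finite Ts\<close> by (rule card_UN_le)
  finally have "real (card {\<sigma> \<in> Pow {..<s}. swap_at \<sigma> s z \<in> Bad}) \<le> real (\<Sum>t\<in>Ts. card (forced t))"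
    by (simp only: of_nat_le_iff)
  also have "\<dots> = (\<Sum>t\<in>Ts. real (card (forced t)))" by (rule of_nat_sum)
  also have "\<dots> \<le> (\<Sum>t\<in>Ts. 2 ^ s / 2 powr \<theta>)"
  proof (rule sum_mono)
    fix t assume "t \<in> Ts"
    then show "real (card (forced t)) \<le> 2 ^ s / 2 powr \<theta>"
      unfolding forced_def
      by (intro card_subsets_agreeing_le) (auto simp: Ts_def split_pairs_def)
  qed
  also have "\<dots> = card Ts * (2 ^ s / 2 powr \<theta>)" by simp
  also have "\<dots> \<le> real ((2 * s + 1) ^ D) * (2 ^ s / 2 powr \<theta>)"
  proof (rule mult_right_mono)
    have "card Ts \<le> card (positions zs ` F)"
      using assms(2) by (intro card_mono) (auto simp: Ts_def)
    also have "\<dots> \<le> (length zs + 1) ^ D"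
      using trace_bound \<open>set zs \<subseteq> P\<close> by blast
    finally show "real (card Ts) \<le> real ((2 * s + 1) ^ D)"
      using \<open>length zs = 2 * s\<close> by (simp only: of_nat_le_iff)
  qed simp
  finally show ?thesis by simp
qed

lemma card_bad_pairs_le:
  fixes xs :: "'a list" and F :: "'a set set"
  assumes "set xs \<subseteq> P" "finite F"
    and trace_bound: "\<forall>zs. set zs \<subseteq> P \<longrightarrow> card (positions zs ` F) \<le> (length zs + 1) ^ D"
    and Bad_def: "Bad = {z \<in> index_lists (length xs) s \<times> index_lists (length xs) s.
      \<exists>B\<in>F. (\<forall>i<s. xs ! (fst z ! i) \<notin> B) \<and> \<theta> \<le> real (card {i. i < s \<and> xs ! (snd z ! i) \<in> B})}"
  shows "real (card Bad) \<le> real (length xs ^ (2 * s)) * real ((2 * s + 1) ^ D) / 2 powr \<theta>"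
proof -
  define LL where "LL = index_lists (length xs) s \<times> index_lists (length xs) s"
  have "finite LL" by (simp add: LL_def finite_index_lists)
  have "Bad \<subseteq> LL" by (auto simp: Bad_def LL_def)
  have "2 ^ s * card Bad = (\<Sum>\<sigma>\<in>Pow {..<s}. card {z \<in> LL. swap_at \<sigma> s z \<in> Bad})"
    using card_swap_at_preimage[OF \<open>Bad \<subseteq> LL\<close>[unfolded LL_def]] by (simp add: LL_def card_Pow)
  also have "\<dots> = (\<Sum>z\<in>LL. card {\<sigma> \<in> Pow {..<s}. swap_at \<sigma> s z \<in> Bad})"
    using sum.swap_restrict[of "Pow {..<s}" LL "\<lambda>_ _. 1::nat" "\<lambda>\<sigma> z. swap_at \<sigma> s z \<in> Bad"]
      \<open>finite LL\<close> by simp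
  finally have swapped: "2 ^ s * card Bad = (\<Sum>z\<in>LL. card {\<sigma> \<in> Pow {..<s}. swap_at \<sigma> s z \<in> Bad})" .
  have "2 ^ s * real (card Bad) = real (2 ^ s * card Bad)" by simp
  also have "\<dots> = (\<Sum>z\<in>LL. real (card {\<sigma> \<in> Pow {..<s}. swap_at \<sigma> s z \<in> Bad}))"
    unfolding swapped by (rule of_nat_sum)
  also have "\<dots> \<le> (\<Sum>z\<in>LL. real ((2 * s + 1) ^ D) * 2 ^ s / 2 powr \<theta>)"
    by (rule sum_mono, rule card_bad_swaps_le[OF assms(1-4)]) (simp add: LL_def)
  also have "\<dots> = 2 ^ s * (real (length xs ^ (2 * s)) * real ((2 * s + 1) ^ D) / 2 powr \<theta>)"
  proof -
    have "card LL = length xs ^ (2 * s)"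
      by (simp add: LL_def card_index_lists card_cartesian_product power_add[symmetric] mult_2)
    then show ?thesis by (simp add: mult_ac)
  qed
  finally show ?thesis by (simp only: mult_le_cancel_left_pos zero_less_power zero_less_numeral)
qed

lemma card_resamples_hitting_ge:
  fixes xs :: "'a list" and \<epsilon> :: real
  assumes "xs \<noteq> []" "\<epsilon> * length xs \<le> hits xs B" "8 \<le> s * \<epsilon>"
  shows "real (length xs ^ s) / 2
    \<le> card {M \<in> index_lists (length xs) s. s * \<epsilon> / 2 \<le> real (card {i. i < s \<and> xs ! (M ! i) \<in> B})}"
proof -
  define T where "T = length xs"
  define r where "r = positions xs B"
  define Good where "Good = {M \<in> index_lists T s. s * \<epsilon> / 2 \<le> real (card {i. i < s \<and> xs ! (M ! i) \<in> B})}"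
  have "0 < T" using assms(1) by (simp add: T_def)
  have r_sub: "{..<T} \<inter> r = r" by (auto simp: r_def T_def positions_def)
  have mu: "s * \<epsilon> \<le> real s * real (card ({..<T} \<inter> r)) / T"
  proof -
    have "real s * (\<epsilon> * T) \<le> real s * real (card r)"
      using assms(2) by (simp add: mult_left_mono r_def T_def hits_eq_card_positions)
    then show ?thesis using \<open>0 < T\<close> r_sub by (simp add: field_simps)
  qed
  have hits_M: "card {i. i < s \<and> xs ! (M ! i) \<in> B} = hits M r" if "M \<in> index_lists T s" for M
  proof -
    have "M ! i < T" if "i < s" for i
      using \<open>M \<in> index_lists T s\<close> that nth_mem by (fastforce simp: index_lists_def)
    then show ?thesis
      using that by (auto simp: hits_eq_card_positions positions_def index_lists_def r_def T_def
          intro!: arg_cong[where f = card])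
  qed
  have "index_lists T s - Good
      \<subseteq> {M \<in> index_lists T s. real (hits M r) < real s * real (card ({..<T} \<inter> r)) / T / 2}"
  proof
    fix M assume M: "M \<in> index_lists T s - Good"
    then have "real (hits M r) < s * \<epsilon> / 2" using hits_M by (auto simp: Good_def not_le)
    also have "\<dots> \<le> real s * real (card ({..<T} \<inter> r)) / T / 2" using mu by simp
    finally show "M \<in> {M \<in> index_lists T s. real (hits M r) < real s * real (card ({..<T} \<inter> r)) / T / 2}"
      using M by simp
  qed
  then have "card (index_lists T s - Good)
      \<le> card {M \<in> index_lists T s. real (hits M r) < real s * real (card ({..<T} \<inter> r)) / T / 2}"
    by (intro card_mono) (simp_all add: finite_index_lists)
  also have "real \<dots> \<le> real (T ^ s) / 2"
    using card_few_hits_le_half[OF \<open>0 < T\<close>] mu assms(3) by simp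
  finally have "real (card (index_lists T s - Good)) \<le> real (T ^ s) / 2" by simp
  moreover have "card (index_lists T s - Good) = T ^ s - card Good"
    by (simp add: card_Diff_subset finite_index_lists card_index_lists Good_def)
  moreover have "card Good \<le> T ^ s"
    using card_mono[OF finite_index_lists, of Good] by (simp add: Good_def card_index_lists)
  ultimately show ?thesis by (simp add: Good_def T_def)
qed

text \<open>Double sampling: if every \<open>s\<close>-sample missed some heavy region, then for at least half of all
  pairs of samples the first would miss a region that the second hits \<open>\<theta>\<close> times, contradicting
  the swapping bound.\<close>
lemma exists_eps_net:
  fixes xs :: "'a list" and F :: "'a set set" and \<epsilon> :: real
  assumes "xs \<noteq> []" "set xs \<subseteq> P" "finite F"
    and trace_bound: "\<forall>zs. set zs \<subseteq> P \<longrightarrow> card (positions zs ` F) \<le> (length zs + 1) ^ D"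
    and heavy: "\<forall>B\<in>F. \<epsilon> * length xs \<le> hits xs B"
    and "8 \<le> s * \<epsilon>" and small: "2 * real ((2 * s + 1) ^ D) < 2 powr (s * \<epsilon> / 2)"
  shows "\<exists>N\<in>index_lists (length xs) s. \<forall>B\<in>F. \<exists>i<s. xs ! (N ! i) \<in> B"
proof (rule ccontr)
  define T where "T = length xs"
  define \<theta> where "\<theta> = s * \<epsilon> / 2"
  assume "\<not> ?thesis"
  then have "\<forall>N\<in>index_lists T s. \<exists>B. B \<in> F \<and> (\<forall>i<s. xs ! (N ! i) \<notin> B)"
    by (auto simp: T_def)
  from bchoice[OF this] obtain missed
    where "\<forall>N\<in>index_lists T s. missed N \<in> F \<and> (\<forall>i<s. xs ! (N ! i) \<notin> missed N)" ..
  then have missed: "\<And>N. N \<in> index_lists T s \<Longrightarrow> missed N \<in> F"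
    "\<And>N i. N \<in> index_lists T s \<Longrightarrow> i < s \<Longrightarrow> xs ! (N ! i) \<notin> missed N"
    by blast+
  define Bad where "Bad = {z \<in> index_lists T s \<times> index_lists T s.
    \<exists>B\<in>F. (\<forall>i<s. xs ! (fst z ! i) \<notin> B) \<and> \<theta> \<le> real (card {i. i < s \<and> xs ! (snd z ! i) \<in> B})}"
  define Good where
    "Good N = {M \<in> index_lists T s. \<theta> \<le> real (card {i. i < s \<and> xs ! (M ! i) \<in> missed N})}" for N
  have "Sigma (index_lists T s) Good \<subseteq> Bad"
  proof (clarify)
    fix N M assume "N \<in> index_lists T s" "M \<in> Good N"
    then have "M \<in> index_lists T s" "\<forall>i<s. xs ! (fst (N, M) ! i) \<notin> missed N"
      "\<theta> \<le> real (card {i. i < s \<and> xs ! (snd (N, M) ! i) \<in> missed N})"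
      using missed(2) by (simp_all add: Good_def)
    then show "(N, M) \<in> Bad"
      using \<open>N \<in> index_lists T s\<close> missed(1) unfolding Bad_def by blast
  qed
  then have "card (Sigma (index_lists T s) Good) \<le> card Bad"
    by (intro card_mono) (simp_all add: Bad_def finite_index_lists)
  moreover have "real (T ^ s) * (real (T ^ s) / 2) \<le> card (Sigma (index_lists T s) Good)"
  proof -
    have "real (T ^ s) / 2 \<le> card (Good N)" if "N \<in> index_lists T s" for N
      using card_resamples_hitting_ge[OF assms(1) _ assms(6)] heavy missed(1)[OF that]
      by (simp add: Good_def T_def \<theta>_def)
    then have "(\<Sum>N\<in>index_lists T s. real (T ^ s) / 2) \<le> (\<Sum>N\<in>index_lists T s. real (card (Good N)))"
      by (rule sum_mono)
    moreover have "card (Sigma (index_lists T s) Good) = (\<Sum>N\<in>index_lists T s. card (Good N))"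
      by (rule card_SigmaI) (simp_all add: finite_index_lists Good_def)
    ultimately show ?thesis by (simp add: card_index_lists)
  qed
  moreover have "real (card Bad) \<le> real (T ^ (2 * s)) * real ((2 * s + 1) ^ D) / 2 powr \<theta>"
    unfolding T_def by (rule card_bad_pairs_le[OF assms(2,3) trace_bound]) (simp add: Bad_def T_def)
  moreover have "real (T ^ (2 * s)) * (1 / 2) = real (T ^ s) * (real (T ^ s) / 2)"
    by (simp add: power_add[symmetric] mult_2)
  ultimately have "real (T ^ (2 * s)) * (1 / 2) \<le> real (T ^ (2 * s)) * (real ((2 * s + 1) ^ D) / 2 powr \<theta>)"
    by (smt (verit) of_nat_le_iff times_divide_eq_right)
  moreover have "0 < real (T ^ (2 * s))" using assms(1) by (simp add: T_def)
  ultimately have "1 / 2 \<le> real ((2 * s + 1) ^ D) / 2 powr \<theta>"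
    by (simp only: mult_le_cancel_left_pos)
  then have "1 / 2 * 2 powr \<theta> \<le> real ((2 * s + 1) ^ D)"
    by (subst (asm) pos_le_divide_eq) auto
  then show False using small unfolding \<theta>_def by linarith
qed

section \<open>Choice of the sample size\<close>

lemma ln_two_ge_half: "1/2 \<le> ln (2::real)"
proof -
  have "ln (1/2::real) \<le> 1/2 - 1" by (rule ln_le_minus_one) simp
  then show ?thesis by (simp add: ln_div)
qed

context
  fixes K0 W :: real and D p s :: nat
  assumes K0: "1 \<le> K0" and p: "2 \<le> p"
    and W_def: "W = 16 * K0 * (2 + 10 * D) + 5"
    and s_def: "s = nat \<lceil>W\<^sup>2 * p * ln p\<rceil>"
begin

lemma ln_p_bounds: "1/2 \<le> ln p" "ln p \<le> p"
proof -
  have "ln 2 \<le> ln (real p)" using p by simp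
  then show "1/2 \<le> ln p" using ln_two_ge_half by linarith
  show "ln p \<le> p" using p by (intro ln_bound) simp
qed

lemma sample_size_between: "W\<^sup>2 * p * ln p \<le> s" "s \<le> W\<^sup>2 * p * ln p + 1"
proof -
  have "0 \<le> W\<^sup>2 * p * ln p" using ln_p_bounds(1) by simp
  then show "W\<^sup>2 * p * ln p \<le> s" "s \<le> W\<^sup>2 * p * ln p + 1"
    unfolding s_def by linarith+
qed

lemma sample_size_le: "real s \<le> (W\<^sup>2 + 1) * p * ln p"
proof -
  have "1 \<le> p * ln p"
    using mult_mono[of 2 "real p" "1/2" "ln p"] p ln_p_bounds(1) by simp
  then show ?thesis using sample_size_between(2) by (simp add: algebra_simps)
qed

lemma sample_fraction_ge: "W\<^sup>2 * ln p / (4 * K0) \<le> s / (4 * K0 * p)"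
proof -
  have "W\<^sup>2 * p * ln p / (4 * K0 * p) \<le> s / (4 * K0 * p)"
    using sample_size_between(1) K0 p by (intro divide_right_mono) auto
  then show ?thesis using p by (simp add: field_simps)
qed

lemma sample_fraction_ge_8: "8 \<le> s / (4 * K0 * p)"
proof -
  have "32 * K0 \<le> W" using K0 by (simp add: W_def algebra_simps)
  then have "160 * K0 \<le> W\<^sup>2"
    using K0 mult_mono[of 5 W "32 * K0" W] by (simp add: W_def power2_eq_square)
  then have "160 * K0 * (1/2) / (4 * K0) \<le> W\<^sup>2 * ln p / (4 * K0)"
    using ln_p_bounds(1) K0 by (intro divide_right_mono mult_mono) auto
  then show ?thesis using sample_fraction_ge K0 by simp
qed

lemma ln_sample_size_le: "ln (2 * s + 1) \<le> 4 * W + 2 * ln p"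
proof -
  have W5: "5 \<le> W" using K0 by (simp add: W_def)
  have "2 * s + 1 \<le> 5 * W\<^sup>2 * (real p)\<^sup>2"
  proof -
    have "25 \<le> W\<^sup>2" using W5 power_mono[of 5 W 2] by simp
    moreover have "4 \<le> real p * p" using p mult_mono[of 2 "real p" 2 "real p"] by simp
    ultimately have "1 \<le> W\<^sup>2 * p * p" using mult_mono[of 1 "W\<^sup>2" 1 "real p * p"] by simp
    have "real (2 * s + 1) \<le> 2 * (W\<^sup>2 * p * ln p) + 3"
      using sample_size_between(2) by simp
    also have "\<dots> \<le> 2 * (W\<^sup>2 * p * p) + 3 * (W\<^sup>2 * p * p)"
    proof (rule add_mono)
      show "2 * (W\<^sup>2 * p * ln p) \<le> 2 * (W\<^sup>2 * p * p)" using ln_p_bounds(2) by (simp add: mult_left_mono)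
      show "3 \<le> 3 * (W\<^sup>2 * p * p)" using \<open>1 \<le> W\<^sup>2 * p * p\<close> by simp
    qed
    finally show ?thesis by (simp add: power2_eq_square)
  qed
  then have "ln (2 * s + 1) \<le> ln (5 * W\<^sup>2 * (real p)\<^sup>2)"
    using W5 p by (subst ln_le_cancel_iff) auto
  also have "\<dots> = ln (5 * W\<^sup>2) + 2 * ln p"
    using W5 p by (simp add: ln_mult ln_realpow)
  also have "ln (5 * W\<^sup>2) \<le> 4 * W"
  proof -
    have "5 * W\<^sup>2 \<le> W\<^sup>2 * W\<^sup>2"
      using W5 power_mono[of 5 W 2] by (intro mult_right_mono) auto
    then have "5 * W\<^sup>2 \<le> W ^ 4" by (simp add: power2_eq_square power4_eq_xxxx mult_ac)
    then have "ln (5 * W\<^sup>2) \<le> ln (W ^ 4)" using W5 by (subst ln_le_cancel_iff) auto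
    also have "\<dots> = 4 * ln W" using W5 by (simp add: ln_realpow)
    also have "\<dots> \<le> 4 * W" using ln_bound[of W] W5 by simp
    finally show ?thesis .
  qed
  finally show ?thesis by simp
qed

text \<open>Both sides are compared on the logarithmic scale, where the left side grows like
  \<open>D (ln W + ln p)\<close> and the right side like \<open>W\<^sup>2 ln p / K0\<close>; \<open>W\<close> is chosen large enough in \<open>K0\<close>
  and \<open>D\<close> for the second to win.\<close>
lemma sample_fraction_exponent: "2 * real ((2 * s + 1) ^ D) < 2 powr (s / (4 * K0 * p) / 2)"
proof -
  define L where "L = ln (real p)"
  have L: "1/2 \<le> L" using ln_p_bounds by (simp add: L_def)
  have W5: "5 \<le> W" using K0 by (simp add: W_def)
  have "ln (2 * real ((2 * s + 1) ^ D)) \<le> ln 2 + D * (4 * W + 2 * L)"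
    using ln_sample_size_le by (simp add: ln_mult ln_realpow mult_left_mono L_def del: of_nat_Suc)
  also have "\<dots> \<le> L * (2 + 8 * D * W + 2 * D)"
  proof -
    have "ln 2 \<le> 2 * L" using ln_2_less_1 L by linarith
    moreover have "D * (4 * W) \<le> D * (8 * W * L)" using L W5 by (intro mult_left_mono) auto
    ultimately show ?thesis by (simp add: algebra_simps)
  qed
  also have "\<dots> < L * (W\<^sup>2 / (16 * K0))"
  proof (rule mult_strict_left_mono)
    have "W * (2 + 10 * D) \<le> W * (W / (16 * K0))"
      using W5 K0 by (intro mult_left_mono) (simp_all add: W_def field_simps)
    moreover have "2 + 8 * D * W + 2 * D < W * (2 + 10 * D)"
      using W5 mult_left_mono[of 1 W "real D"] by (simp add: algebra_simps)
    ultimately show "2 + 8 * D * W + 2 * D < W\<^sup>2 / (16 * K0)" by (simp add: power2_eq_square)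
  qed (use L in simp)
  also have "\<dots> \<le> ln (2 powr (s / (4 * K0 * p) / 2))"
  proof -
    have "L * (W\<^sup>2 / (16 * K0)) = W\<^sup>2 * L / (4 * K0) / 2 * (1/2)" by (simp add: field_simps)
    also have "\<dots> \<le> s / (4 * K0 * p) / 2 * ln 2"
      using sample_fraction_ge ln_two_ge_half K0 by (intro mult_mono divide_right_mono) (auto simp: L_def)
    finally show ?thesis by simp
  qed
  finally show ?thesis by (subst (asm) ln_less_cancel_iff) auto
qed

end

definition transversal_constant :: "real \<Rightarrow> real" where
  "transversal_constant c = (16 * (4 * exp 1 * c + 1) * (2 + 10 * shatter_bound c) + 5)\<^sup>2 + 1"

context sparse_delaunay_family
begin

lemma small_transversal:
  assumes "2 \<le> p" "p2_property p F"
  shows "\<exists>T. finite T \<and> T \<subseteq> P \<and> (\<forall>B\<in>F. T \<inter> B \<noteq> {}) \<and>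
    card T \<le> transversal_constant c * p * ln p"
proof (cases "F = {}")
  case True
  then show ?thesis
    using assms(1) by (intro exI[of _ "{}"]) (simp add: transversal_constant_def)
next
  case False
  define K0 where "K0 = 4 * exp 1 * c + 1"
  define W where "W = 16 * K0 * (2 + 10 * shatter_bound c) + 5"
  define s where "s = nat \<lceil>W\<^sup>2 * p * ln p\<rceil>"
  define \<epsilon> where "\<epsilon> = 1 / (4 * K0 * p)"
  have "1 \<le> K0" using c_nonneg by (simp add: K0_def)
  have "0 < 4 * K0 * p" using \<open>1 \<le> K0\<close> assms(1) by simp
  obtain xs where xs: "xs \<noteq> []" "set xs \<subseteq> P" "\<forall>B\<in>F. length xs \<le> 4 * (K0 * p) * hits xs B"
    using exists_fractional_transversal[OF assms(2) _ False] assms(1) unfolding K0_def by auto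
  have heavy: "\<forall>B\<in>F. \<epsilon> * length xs \<le> hits xs B"
  proof
    fix B assume "B \<in> F"
    then have "length xs \<le> hits xs B * (4 * K0 * p)" using xs(3) by (simp add: mult_ac)
    then show "\<epsilon> * length xs \<le> hits xs B"
      using \<open>0 < 4 * K0 * p\<close> by (simp add: \<epsilon>_def pos_divide_le_eq)
  qed
  have "8 \<le> s * \<epsilon>" "2 * real ((2 * s + 1) ^ shatter_bound c) < 2 powr (s * \<epsilon> / 2)"
    using sample_fraction_ge_8[OF \<open>1 \<le> K0\<close> assms(1) W_def s_def]
      sample_fraction_exponent[OF \<open>1 \<le> K0\<close> assms(1) W_def s_def]
    by (simp_all add: \<epsilon>_def)
  moreover have "\<forall>zs. set zs \<subseteq> P \<longrightarrow> card (positions zs ` F) \<le> (length zs + 1) ^ shatter_bound c"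
    using card_positions_image_le by blast
  ultimately obtain N where N: "N \<in> index_lists (length xs) s" "\<forall>B\<in>F. \<exists>i<s. xs ! (N ! i) \<in> B"
    using exists_eps_net[OF xs(1,2) finite_F _ heavy] by blast
  define T where "T = (\<lambda>i. xs ! (N ! i)) ` {..<s}"
  have "T \<subseteq> P"
    using N(1) xs(2) nth_mem by (fastforce simp: T_def index_lists_def)
  moreover have "\<forall>B\<in>F. T \<inter> B \<noteq> {}" using N(2) by (auto simp: T_def)
  moreover have "real (card T) \<le> transversal_constant c * p * ln p"
  proof -
    have "card T \<le> s" using card_image_le[of "{..<s}"] by (simp add: T_def)
    then show ?thesis
      using sample_size_le[OF \<open>1 \<le> K0\<close> assms(1) W_def s_def]
      by (simp add: transversal_constant_def W_def K0_def)
  qed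
  ultimately show ?thesis by (auto simp: T_def)
qed

end

lemma sparse_delaunay_family_euclid:
  assumes "finite F" "\<forall>B\<in>F. B \<noteq> {} \<and> B \<subseteq> euclid d" "0 < c"
    and "hereditarily_linear_delaunay c F (dual_edges d F)"
  shows "sparse_delaunay_family (euclid d) F c"
proof (unfold_locales)
  show "finite F" by (fact assms(1))
  show "B \<subseteq> euclid d" "B \<noteq> {}" if "B \<in> F" for B
    using assms(2) that by simp_all
  show "0 \<le> c" using assms(3) by simp
  fix R assume "R \<subseteq> F"
  show "real (card (delaunay_edges (restrict_edges (dual_hyperedges (euclid d) F) R))) \<le> c * card R"
  proof (cases "R = {}")
    case True
    then have "delaunay_edges (restrict_edges (dual_hyperedges (euclid d) F) R) = {}"
      by (simp add: delaunay_edges_def restrict_edges_def image_constant_conv)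
    then show ?thesis using True by simp
  next
    case False
    then have "real (card (delaunay_edges (restrict_edges (dual_edges d F) R))) < c * card R"
      using assms(4) \<open>R \<subseteq> F\<close> by (simp add: hereditarily_linear_delaunay_def)
    moreover have "dual_edges d F = dual_hyperedges (euclid d) F"
      by (simp add: dual_edges_def dual_hyperedges_def)
    ultimately show ?thesis by simp
  qed
qed

theorem theorem2:
  fixes c :: real
  assumes "c > 0"
  shows "\<exists>C::real. \<forall>(d::nat) (p::nat) (F::(nat \<Rightarrow> real) set set).
           p \<ge> 2 \<and> finite F \<and> (\<forall>B\<in>F. B \<noteq> {} \<and> B \<subseteq> euclid d) \<and>
           hereditarily_linear_delaunay c F (dual_edges d F) \<and> p2_property p F
           \<longrightarrow> (\<exists>T. finite T \<and> is_transversal d T F \<and>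
                     real (card T) \<le> C * real p * ln (real p))"
proof (intro exI[of _ "transversal_constant c"] allI impI)
  fix d p and F :: "(nat \<Rightarrow> real) set set"
  assume "p \<ge> 2 \<and> finite F \<and> (\<forall>B\<in>F. B \<noteq> {} \<and> B \<subseteq> euclid d) \<and>
    hereditarily_linear_delaunay c F (dual_edges d F) \<and> p2_property p F"
  then have "sparse_delaunay_family (euclid d) F c" and "p \<ge> 2" "p2_property p F"
    using assms by (auto intro!: sparse_delaunay_family_euclid)
  then show "\<exists>T. finite T \<and> is_transversal d T F \<and>
      real (card T) \<le> transversal_constant c * real p * ln (real p)"
    unfolding is_transversal_def conj_assoc by (rule sparse_delaunay_family.small_transversal)
qed

end
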